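(* Consider a finite MDP with state space $\mathcal{X}=\{1,\dots,n\}$, finite action set $\mathcal{A}$, costs $c(i,a)\in\mathbb{R}$, discount factor $\vartheta\in(0,1)$, nominal transition probability vectors $p^a_i\in\Delta_n$, confidence regions $U^a_i$ and proxy confidence regions $\widehat{U^a_i}$ as described in the context, and let $\mathrm{Q}^*$ be the robust optimal $\mathrm{Q}$-factors. Let the step lengths $\gamma_t\ge 0$ satisfy $\sum_{t=0}^\infty\gamma_t=\infty$ and $\sum_{t=0}^\infty\gamma_t^2<\infty$. Let $\beta^a_i:=\max_{y\in\widehat{U^a_i}}\min_{x\in U^a_i}\|y-x\|_1$ and $\beta:=\max_{i\in\mathcal{X},a\in\mathcal{A}}\beta^a_i$. If $\vartheta(1+\beta)<1$, then with probability $1$ the robust $\mathrm{Q}$-iteration \[ \mathrm{Q}_t(i,a)=(1-\gamma_t)\mathrm{Q}_{t-1}(i,a)+\gamma_t\Big(c(i,a)+\vartheta\,\sigma_{\widehat{U^a_i}}(v_{t-1})+\vartheta\min_{a'\in\mathcal{A}}\mathrm{Q}_{t-1}(j,a')\Big), \] where $v_{t-1}(k):=\min_{a\in\mathcal{A}}\mathrm{Q}_{t-1}(k,a)$ and $j$ is a state sampled according to $p^a_i$, converges to $\mathrm{Q}$-factors $\mathrm{Q}'$ that are $\varepsilon$-optimal, i.e. $\|\mathrm{Q}'-\mathrm{Q}^*\|_\infty\le\varepsilon\|\mathrm{Q}^*\|_\infty$, where $\varepsilon:=\dfrac{\vartheta\beta}{1-\vartheta(1+\beta)}$.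
   Context: Setting: for each state $i\in\mathcal{X}$ and action $a\in\mathcal{A}$, $p^a_i\in\Delta_n$ (the probability simplex in $\mathbb{R}^n$) is an unknown transition probability vector from which next states can only be sampled. A confidence region $U^a_i\subseteq\mathbb{R}^n$ (nonempty, compact) defines the uncertainty set $\mathcal{P}^a_i:=\{p^a_i+x\mid x\in U^a_i\}$, assumed to lie in $\Delta_n$. The proxy confidence region $\widehat{U^a_i}\supseteq U^a_i$ is a nonempty compact set (obtained by dropping the constraints that keep $\mathcal{P}^a_i$ inside the simplex); it need not satisfy $p^a_i+\widehat{U^a_i}\subseteq\Delta_n$. For $S\subseteq\mathbb{R}^n$, $\sigma_S(v):=\sup_{s\in S}s^\top v$. The robust optimal $\mathrm{Q}$-factors $\mathrm{Q}^*:\mathcal{X}\times\mathcal{A}\to\mathbb{R}$ are the solution of $\mathrm{Q}^*(i,a)=c(i,a)+\vartheta\,\sigma_{\mathcal{P}^a_i}(v^* )$ with $v^*(k)=\min_{a\in\mathcal{A}}\mathrm{Q}^*(k,a)$ (the Q-factors of the policy minimizing the worst-case expected discounted cost over transitions chosen from the sets $\mathcal{P}^a_i$). $\mathrm{Q}$-factors are viewed as $|\mathcal{X}|\times|\mathcal{A}|$ matrices and $\|\mathrm{Q}\|_\infty=\max_{i,a}|\mathrm{Q}(i,a)|$. In the iteration, $\mathrm{Q}_0$ is arbitrary and at each step the update is applied to each pair $(i,a)$ with a fresh sample $j\sim p^a_i$. *)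

theory Defs
  imports "HOL-Probability.Probability"
begin

definition support_fun :: "(real ^ 'n) set \<Rightarrow> real ^ 'n \<Rightarrow> real" where
  "support_fun S v = (SUP s\<in>S. s \<bullet> v)"

definition norm1 :: "real ^ 'n::finite \<Rightarrow> real" where
  "norm1 x = (\<Sum>k\<in>UNIV. \<bar>x $ k\<bar>)"

definition pmf_vec :: "'n::finite pmf \<Rightarrow> real ^ 'n" where
  "pmf_vec q = (\<chi> k. pmf q k)"

definition prob_simplex :: "(real ^ 'n::finite) set" where
  "prob_simplex = {x. (\<forall>k. 0 \<le> x $ k) \<and> (\<Sum>k\<in>UNIV. x $ k) = 1}"

definition Qnorm :: "('s::finite \<Rightarrow> 'a::finite \<Rightarrow> real) \<Rightarrow> real" where
  "Qnorm Q = Max (range (\<lambda>(i, a). \<bar>Q i a\<bar>))"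

definition vfun :: "('s::finite \<Rightarrow> 'a::finite \<Rightarrow> real) \<Rightarrow> real ^ 's" where
  "vfun Q = (\<chi> k. Min (range (Q k)))"

definition beta_ia :: "(real ^ 'n::finite) set \<Rightarrow> (real ^ 'n) set \<Rightarrow> real" where
  "beta_ia Uhat U = (SUP y\<in>Uhat. INF x\<in>U. norm1 (y - x))"

text \<open>The robust Q-iteration driven by a sample path omega: omega (t, i, a) is the
  next state sampled from p_i^a at step t (only used for t >= 1).\<close>
primrec robust_Q_iter ::
  "('s::finite \<Rightarrow> 'a::finite \<Rightarrow> real) \<Rightarrow> ('s \<Rightarrow> 'a \<Rightarrow> real) \<Rightarrow> real \<Rightarrow>
   ('s \<Rightarrow> 'a \<Rightarrow> (real ^ 's) set) \<Rightarrow> (nat \<Rightarrow> real) \<Rightarrow>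
   (nat \<times> 's \<times> 'a \<Rightarrow> 's) \<Rightarrow> nat \<Rightarrow> 's \<Rightarrow> 'a \<Rightarrow> real" where
  "robust_Q_iter Q0 c \<theta> Uhat \<gamma> \<omega> 0 = Q0"
| "robust_Q_iter Q0 c \<theta> Uhat \<gamma> \<omega> (Suc t) =
     (let Qp = robust_Q_iter Q0 c \<theta> Uhat \<gamma> \<omega> t in
      (\<lambda>i a. (1 - \<gamma> (Suc t)) * Qp i a
         + \<gamma> (Suc t) * (c i a + \<theta> * support_fun (Uhat i a) (vfun Qp)
                          + \<theta> * Min (range (Qp (\<omega> (Suc t, i, a)))))))"

end

theory Submission
  imports Defs
begin

text \<open>
  The proxy Bellman operator \<open>F Q = c + \<theta> (support_fun Uhat v + p \<bullet> v)\<close> is the conditional mean of the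
  update, and it is a \<open>\<theta>(1 + \<beta>)\<close>-contraction in the sup norm because every \<open>p + y\<close> with
  \<open>y \<in> Uhat\<close> has 1-norm at most \<open>1 + \<beta>\<close>. On the value vector of \<open>Q\<^sup>*\<close> it differs from the
  robust operator by at most \<open>\<theta> \<beta> \<parallel>Q\<^sup>*\<parallel>\<close>, which bounds the distance from its fixed point to \<open>Q\<^sup>*\<close>.
  The iteration is \<open>F\<close> plus bounded noise that is orthogonal in \<open>L\<^sup>2\<close>. The noise averaged with
  the step lengths tends to \<open>0\<close> almost surely, because its second moments are summable
  against \<open>\<gamma>\<close>; subtracting it leaves a perturbed deterministic contraction, which converges
  to the fixed point of \<open>F\<close>.
\<close>

section \<open>Recursive inequalities for real sequences\<close>

lemma not_summable_partial_sums_eventually_ge: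
  fixes g :: "nat \<Rightarrow> real"
  assumes "\<And>t. 0 \<le> g t" and "\<not> summable g"
  shows "\<exists>n. \<forall>t\<ge>n. B \<le> sum g {..<t}"
proof -
  obtain n where n: "B < sum g {..<n}"
    using assms summableI_nonneg_bounded[of g B] by (meson not_le)
  have "sum g {..<n} \<le> sum g {..<t}" if "n \<le> t" for t
    using that assms(1) by (intro sum_mono2) auto
  with n show ?thesis by (meson less_imp_le order_trans)
qed

lemma contracting_recursion_exp_bound:
  fixes y g :: "nat \<Rightarrow> real"
  assumes "\<And>t. t \<ge> T \<Longrightarrow> 0 \<le> \<kappa> * g t \<and> \<kappa> * g t \<le> 1 \<and> y (Suc t) \<le> (1 - \<kappa> * g t) * y t"
  shows "y (T + n) \<le> max (y T) 0 * exp (- \<kappa> * sum g {T..<T + n})"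
proof (induction n)
  case 0
  then show ?case by simp
next
  case (Suc n)
  let ?t = "T + n" and ?P = "\<lambda>t. max (y T) 0 * exp (- \<kappa> * sum g {T..<t})"
  have g: "0 \<le> \<kappa> * g ?t" "\<kappa> * g ?t \<le> 1" and y: "y (Suc ?t) \<le> (1 - \<kappa> * g ?t) * y ?t"
    using assms[of ?t] by auto
  have "y (Suc ?t) \<le> (1 - \<kappa> * g ?t) * ?P ?t"
    using y Suc g by (meson diff_ge_0_iff_ge mult_left_mono order_trans)
  also have "\<dots> \<le> exp (- (\<kappa> * g ?t)) * ?P ?t"
    using exp_ge_add_one_self[of "- (\<kappa> * g ?t)"] by (intro mult_right_mono) auto
  also have "\<dots> = ?P (Suc ?t)"
    by (simp add: sum.atLeastLessThan_Suc algebra_simps exp_add[symmetric])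
  finally show ?case by simp
qed

lemma contracting_recursion_tendsto_zero:
  fixes x g e :: "nat \<Rightarrow> real"
  assumes \<kappa>: "\<kappa> > 0" and g: "\<And>t. 0 \<le> g t" "\<not> summable g" and e: "e \<longlonglongrightarrow> 0"
    and rec: "eventually (\<lambda>t. 0 \<le> x t \<and> \<kappa> * g t \<le> 1 \<and>
                 x (Suc t) \<le> (1 - \<kappa> * g t) * x t + \<kappa> * g t * e t) sequentially"
  shows "x \<longlonglongrightarrow> 0"
proof (rule LIMSEQ_I)
  fix r :: real assume r: "0 < r"
  have "eventually (\<lambda>t. e t < r/2) sequentially"
    using e r by (auto dest: order_tendstoD(2)[where a="r/2"])
  with rec obtain T where T: "\<And>t. t \<ge> T \<Longrightarrow> 0 \<le> x t \<and> \<kappa> * g t \<le> 1 \<and>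
      x (Suc t) \<le> (1 - \<kappa> * g t) * x t + \<kappa> * g t * e t \<and> e t < r/2"
    unfolding eventually_sequentially by (metis (no_types, lifting) eventually_conj eventually_sequentially)
  \<comment> \<open>beyond \<open>T\<close>, \<open>x - r/2\<close> shrinks by factors \<open>exp (- \<kappa> g t)\<close>, whose product vanishes as \<open>\<Sum> g = \<infinity>\<close>\<close>
  define y where "y t = x t - r/2" for t
  have "0 \<le> \<kappa> * g t \<and> \<kappa> * g t \<le> 1 \<and> y (Suc t) \<le> (1 - \<kappa> * g t) * y t" if "t \<ge> T" for t
  proof -
    have "\<kappa> * g t * e t \<le> \<kappa> * g t * (r/2)"
      using T[OF that] \<kappa> g(1)[of t] by (intro mult_left_mono) auto
    then have "x (Suc t) \<le> (1 - \<kappa> * g t) * x t + \<kappa> * g t * (r/2)"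
      using T[OF that] by linarith
    with T[OF that] \<kappa> g(1)[of t] show ?thesis unfolding y_def by (simp add: algebra_simps)
  qed
  note y_bound = contracting_recursion_exp_bound[of T \<kappa> g y, OF this]
  define Y where "Y = max (y T) 0"
  have Y0: "0 \<le> Y"
    by (simp add: Y_def)
  define B where "B = (ln (Y + 1) - ln (r/2)) / \<kappa>"
  obtain n where n: "\<forall>t\<ge>n. B + sum g {..<T} \<le> sum g {..<t}"
    using not_summable_partial_sums_eventually_ge[OF g] by blast
  show "\<exists>no. \<forall>t\<ge>no. norm (x t - 0) < r"
  proof (intro exI allI impI)
    fix t assume t: "max n T \<le> t"
    then have "sum g {..<t} = sum g {..<T} + sum g {T..<t}"
      by (metis max.bounded_iff sum.atLeastLessThan_concat lessThan_atLeast0 zero_le)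
    with n t have "B \<le> sum g {T..<t}"
      by fastforce
    then have "- \<kappa> * sum g {T..<t} \<le> ln (r/2) - ln (Y + 1)"
      using \<kappa> by (simp add: B_def field_simps)
    then have "exp (- \<kappa> * sum g {T..<t}) \<le> exp (ln (r/2) - ln (Y + 1))"
      by simp
    also have "\<dots> = (r/2) / (Y + 1)"
      using r Y0 by (simp add: exp_diff)
    finally have "exp (- \<kappa> * sum g {T..<t}) \<le> (r/2) / (Y + 1)" .
    then have "Y * exp (- \<kappa> * sum g {T..<t}) \<le> Y * ((r/2) / (Y + 1))"
      using Y0 by (rule mult_left_mono)
    also have "\<dots> < r/2"
      using r Y0 by (simp add: field_simps)
    finally have "y t < r/2"
      using y_bound[of "t - T"] t unfolding Y_def by simp
    then show "norm (x t - 0) < r"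
      using T[of t] t by (simp add: y_def)
  qed
qed

lemma slowly_growing_sequence_bound:
  fixes u g :: "nat \<Rightarrow> real"
  assumes g: "\<And>t. 0 \<le> g t" and u: "\<And>t. 0 \<le> u t" and \<epsilon>: "0 < \<epsilon>" and C: "0 < C"
    and start: "u N \<le> \<epsilon>"
    and step: "\<And>t. t \<ge> N \<Longrightarrow> u (Suc t) \<le> u t + C * g t \<and> C * g t \<le> \<epsilon>"
  shows "u (N + n) \<le> 2 * \<epsilon> + (C / \<epsilon>) * (\<Sum>s\<in>{N..<N + n}. g s * u s)"
proof (induction n)
  case 0
  then show ?case using start \<epsilon> by simp
next
  case (Suc n)
  let ?t = "N + n" and ?S = "\<lambda>m. (C / \<epsilon>) * (\<Sum>s\<in>{N..<m}. g s * u s)"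
  have S0: "0 \<le> ?S m" for m
    using g u C \<epsilon> by (intro mult_nonneg_nonneg sum_nonneg) auto
  have step_t: "u (Suc ?t) \<le> u ?t + C * g ?t" "C * g ?t \<le> \<epsilon>"
    using step[of ?t] by auto
  show ?case
  proof (cases "u ?t \<le> \<epsilon>")
    case True
    then show ?thesis using step_t S0[of "Suc ?t"] by simp
  next
    case False
    \<comment> \<open>above level \<open>\<epsilon>\<close>, the growth \<open>C * g t\<close> is paid for by the weighted sum\<close>
    have "g ?t * \<epsilon> \<le> g ?t * u ?t"
      using False g[of ?t] by (intro mult_left_mono) auto
    then have "C * g ?t \<le> (C / \<epsilon>) * (g ?t * u ?t)"
      using C \<epsilon> by (simp add: field_simps)
    then have "u (Suc ?t) \<le> 2 * \<epsilon> + ?S ?t + (C / \<epsilon>) * (g ?t * u ?t)"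
      using step_t Suc by simp
    also have "\<dots> = 2 * \<epsilon> + ?S (Suc ?t)"
      by (simp add: algebra_simps)
    finally show ?thesis by simp
  qed
qed

lemma weighted_summable_tendsto_zero:
  fixes u g :: "nat \<Rightarrow> real"
  assumes g: "\<And>t. 0 \<le> g t" "\<not> summable g" "g \<longlonglongrightarrow> 0"
    and u: "\<And>t. 0 \<le> u t" and su: "summable (\<lambda>t. g t * u t)" and C: "C > 0"
    and growth: "eventually (\<lambda>t. u (Suc t) \<le> u t + C * g t) sequentially"
  shows "u \<longlonglongrightarrow> 0"
proof (rule LIMSEQ_I)
  fix r :: real assume r: "0 < r"
  define \<epsilon> where "\<epsilon> = r / 4"
  have \<epsilon>: "0 < \<epsilon>" using r by (simp add: \<epsilon>_def)
  let ?f = "\<lambda>t. g t * u t"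
  have "eventually (\<lambda>t. C * g t < \<epsilon>) sequentially"
    using tendsto_mult_right_zero[OF g(3), of C] \<epsilon> by (auto dest: order_tendstoD(2))
  moreover have "eventually (\<lambda>n. suminf ?f - \<epsilon> * \<epsilon> / C < sum ?f {..<n}) sequentially"
    using summable_LIMSEQ[OF su] \<epsilon> C by (intro order_tendstoD(1)) auto
  ultimately have "eventually (\<lambda>t. (u (Suc t) \<le> u t + C * g t \<and> C * g t < \<epsilon>) \<and>
      suminf ?f - \<epsilon> * \<epsilon> / C < sum ?f {..<t}) sequentially"
    using growth by (intro eventually_conj) auto
  then obtain N where N: "\<And>t. t \<ge> N \<Longrightarrow> (u (Suc t) \<le> u t + C * g t \<and> C * g t < \<epsilon>) \<and>
      suminf ?f - \<epsilon> * \<epsilon> / C < sum ?f {..<t}"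
    unfolding eventually_sequentially by blast
  \<comment> \<open>\<open>u\<close> cannot stay above \<open>\<epsilon>\<close>, as then \<open>\<Sum> g \<le> \<Sum> g u / \<epsilon> < \<infinity>\<close>\<close>
  have "\<exists>N'\<ge>N. u N' \<le> \<epsilon>"
  proof (rule ccontr)
    assume large: "\<not> ?thesis"
    have "norm (g t) \<le> ?f t / \<epsilon>" if "t \<ge> N" for t
    proof -
      have "g t * \<epsilon> \<le> g t * u t"
        using large that g(1)[of t] by (intro mult_left_mono) auto
      then show ?thesis using g(1)[of t] \<epsilon> by (simp add: field_simps)
    qed
    then have "eventually (\<lambda>t. norm (g t) \<le> ?f t / \<epsilon>) sequentially"
      unfolding eventually_sequentially by blast
    with summable_divide[OF su] have "summable g"
      by (rule summable_comparison_test_ev[rotated])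
    with g(2) show False by simp
  qed
  then obtain N' where N': "N' \<ge> N" "u N' \<le> \<epsilon>" by blast
  show "\<exists>no. \<forall>t\<ge>no. norm (u t - 0) < r"
  proof (intro exI allI impI)
    fix t assume t: "N' \<le> t"
    have "sum ?f {..<N'} + sum ?f {N'..<t} = sum ?f {..<t}"
      using t by (metis sum.atLeastLessThan_concat lessThan_atLeast0 zero_le)
    also have "\<dots> \<le> suminf ?f"
      using su g(1) u by (intro sum_le_suminf) auto
    finally have "(C / \<epsilon>) * sum ?f {N'..<t} \<le> (C / \<epsilon>) * (\<epsilon> * \<epsilon> / C)"
      using N[of N'] N' C \<epsilon> by (intro mult_left_mono) auto
    also have "\<dots> = \<epsilon>" using C \<epsilon> by (simp add: field_simps)
    finally have "u t \<le> 3 * \<epsilon>"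
      using slowly_growing_sequence_bound[of g u \<epsilon> C N' "t - N'", OF g(1) u \<epsilon> C N'(2)] N N' t
      by (simp add: less_imp_le)
    then show "norm (u t - 0) < r" using u[of t] \<epsilon> unfolding \<epsilon>_def by simp
  qed
qed

lemma summable_weighted_of_contracting_recursion:
  fixes V g :: "nat \<Rightarrow> real"
  assumes g: "\<And>t. 0 \<le> g t" "summable (\<lambda>t. (g t)\<^sup>2)" and V: "\<And>t. 0 \<le> V t"
    and rec: "\<And>t. t \<ge> T \<Longrightarrow> V (Suc t) \<le> (1 - g t) * V t + (g t)\<^sup>2"
  shows "summable (\<lambda>t. g t * V t)"
proof (rule summableI_nonneg_bounded)
  show "0 \<le> g t * V t" for t
    using g(1) V by simp
  define S where "S = (\<Sum>t<T. g t * V t) + V T + (\<Sum>t. (g t)\<^sup>2)"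
  have telescope: "(\<Sum>t<T + m. g t * V t) + V (T + m) \<le> (\<Sum>t<T. g t * V t) + V T + (\<Sum>t<T + m. (g t)\<^sup>2)" for m
  proof (induction m)
    case 0
    then show ?case by (simp add: sum_nonneg)
  next
    case (Suc m)
    then show ?case using rec[of "T + m"] by (simp add: algebra_simps)
  qed
  have partial_g2: "(\<Sum>t<n. (g t)\<^sup>2) \<le> (\<Sum>t. (g t)\<^sup>2)" for n
    using g(2) by (intro sum_le_suminf) auto
  show "(\<Sum>t<n. g t * V t) \<le> S" for n
  proof (cases "n \<le> T")
    case True
    then have "(\<Sum>t<n. g t * V t) \<le> (\<Sum>t<T. g t * V t)"
      using g(1) V by (intro sum_mono2) auto
    then show ?thesis using V[of T] partial_g2[of 0] unfolding S_def by simp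
  next
    case False
    then show ?thesis using telescope[of "n - T"] V[of n] partial_g2[of n] unfolding S_def by simp
  qed
qed

lemma geometric_Cauchy_tendsto_lim:
  fixes x :: "nat \<Rightarrow> real"
  assumes \<rho>: "0 \<le> \<rho>" "\<rho> < 1" and close: "\<And>m n. n \<le> m \<Longrightarrow> \<bar>x m - x n\<bar> \<le> \<rho> ^ n * C"
  shows "x \<longlonglongrightarrow> lim x" and "\<bar>lim x - x n\<bar> \<le> \<rho> ^ n * C"
proof -
  have small: "(\<lambda>n. \<rho> ^ n * C) \<longlonglongrightarrow> 0"
    using LIMSEQ_power_zero[of \<rho>] \<rho> by (intro tendsto_mult_left_zero) auto
  have "Cauchy x"
  proof (rule metric_CauchyI)
    fix e :: real assume "0 < e"
    then obtain M where M: "\<forall>n\<ge>M. norm (\<rho> ^ n * C - 0) < e"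
      using LIMSEQ_D[OF small] by blast
    have "dist (x m) (x n) < e" if "M \<le> m" "M \<le> n" for m n
    proof (cases "n \<le> m")
      case True
      have "\<bar>\<rho> ^ n * C\<bar> < e"
        using M that(2) by simp
      then show ?thesis
        using close[OF True] abs_ge_self[of "\<rho> ^ n * C"] unfolding dist_real_def by linarith
    next
      case False
      have "\<bar>\<rho> ^ m * C\<bar> < e"
        using M that(1) by simp
      then show ?thesis
        using close[of m n] False abs_ge_self[of "\<rho> ^ m * C"] abs_minus_commute[of "x m" "x n"]
        unfolding dist_real_def by linarith
    qed
    then show "\<exists>M. \<forall>m\<ge>M. \<forall>n\<ge>M. dist (x m) (x n) < e" by blast
  qed
  then show lim: "x \<longlonglongrightarrow> lim x"
    by (intro Cauchy_convergent[THEN convergent_LIMSEQ_iff[THEN iffD1]])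
  show "\<bar>lim x - x n\<bar> \<le> \<rho> ^ n * C"
  proof (rule tendsto_upperbound)
    show "(\<lambda>m. \<bar>x m - x n\<bar>) \<longlonglongrightarrow> \<bar>lim x - x n\<bar>"
      by (intro tendsto_intros lim)
    show "eventually (\<lambda>m. \<bar>x m - x n\<bar> \<le> \<rho> ^ n * C) sequentially"
      unfolding eventually_sequentially using close by blast
  qed simp
qed

lemma abs_sum_mult_le_card:
  fixes x y :: "'n::finite \<Rightarrow> real"
  assumes "\<And>k. \<bar>x k\<bar> \<le> A" "\<And>k. \<bar>y k\<bar> \<le> B"
  shows "\<bar>\<Sum>k\<in>UNIV. x k * y k\<bar> \<le> real CARD('n) * A * B"
proof -
  have "\<bar>\<Sum>k\<in>UNIV. x k * y k\<bar> \<le> (\<Sum>k\<in>(UNIV::'n set). A * B)"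
  proof (rule order_trans[OF sum_abs], rule sum_mono)
    fix k
    have "\<bar>x k\<bar> * \<bar>y k\<bar> \<le> A * B"
      using assms[of k] by (intro mult_mono) auto
    then show "\<bar>x k * y k\<bar> \<le> A * B" by (simp add: abs_mult)
  qed
  then show ?thesis by simp
qed

lemma abs_le_sum3:
  fixes f :: "'i::finite \<Rightarrow> 'j::finite \<Rightarrow> 'k::finite \<Rightarrow> real"
  shows "\<bar>f i a k\<bar> \<le> (\<Sum>i\<in>UNIV. \<Sum>a\<in>UNIV. \<Sum>k\<in>UNIV. \<bar>f i a k\<bar>)"
proof -
  have "\<bar>f i a k\<bar> \<le> (\<Sum>k\<in>UNIV. \<bar>f i a k\<bar>)"
    by (rule member_le_sum) auto
  also have "\<dots> \<le> (\<Sum>a\<in>UNIV. \<Sum>k\<in>UNIV. \<bar>f i a k\<bar>)"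
    by (rule member_le_sum[where f="\<lambda>a. \<Sum>k\<in>UNIV. \<bar>f i a k\<bar>"]) (auto intro: sum_nonneg)
  also have "\<dots> \<le> (\<Sum>i\<in>UNIV. \<Sum>a\<in>UNIV. \<Sum>k\<in>UNIV. \<bar>f i a k\<bar>)"
    by (rule member_le_sum[where f="\<lambda>i. \<Sum>a\<in>UNIV. \<Sum>k\<in>UNIV. \<bar>f i a k\<bar>"]) (auto intro: sum_nonneg)
  finally show ?thesis .
qed

section \<open>Sup-norm distance of Q-factors\<close>

definition Qdist :: "('s::finite \<Rightarrow> 'a::finite \<Rightarrow> real) \<Rightarrow> ('s \<Rightarrow> 'a \<Rightarrow> real) \<Rightarrow> real" where
  "Qdist Q Q' = Qnorm (\<lambda>i a. Q i a - Q' i a)"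

definition Qlipschitz ::
  "real \<Rightarrow> (('s::finite \<Rightarrow> 'a::finite \<Rightarrow> real) \<Rightarrow> 's \<Rightarrow> 'a \<Rightarrow> real) \<Rightarrow> bool" where
  "Qlipschitz \<rho> F \<longleftrightarrow> (\<forall>Q Q'. Qdist (F Q) (F Q') \<le> \<rho> * Qdist Q Q')"

lemma Qnorm_ge: "\<bar>Q i a\<bar> \<le> Qnorm (Q :: 's::finite \<Rightarrow> 'a::finite \<Rightarrow> real)"
  unfolding Qnorm_def by (rule Max_ge) (auto intro: image_eqI[where x="(i, a)"])

lemma Qnorm_le: "(\<And>i a. \<bar>Q i a\<bar> \<le> B) \<Longrightarrow> Qnorm (Q :: 's::finite \<Rightarrow> 'a::finite \<Rightarrow> real) \<le> B"
  unfolding Qnorm_def by (rule Max.boundedI) auto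

lemma Qnorm_nonneg: "0 \<le> Qnorm (Q :: 's::finite \<Rightarrow> 'a::finite \<Rightarrow> real)"
  using Qnorm_ge[of Q] abs_ge_zero order_trans by blast

lemma Qdist_ge: "\<bar>Q i a - Q' i a\<bar> \<le> Qdist Q Q'"
  unfolding Qdist_def by (rule Qnorm_ge[of "\<lambda>i a. Q i a - Q' i a"])

lemma Qdist_le: "(\<And>i a. \<bar>Q i a - Q' i a\<bar> \<le> B) \<Longrightarrow> Qdist Q Q' \<le> B"
  unfolding Qdist_def by (rule Qnorm_le)

lemma Qdist_nonneg: "0 \<le> Qdist Q Q'"
  unfolding Qdist_def by (rule Qnorm_nonneg)

lemma Qdist_self [simp]: "Qdist Q Q = 0"
  by (simp add: Qdist_def Qnorm_def)

lemma Qdist_zero_right [simp]: "Qdist Q (\<lambda>_ _. 0) = Qnorm Q"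
  by (simp add: Qdist_def)

lemma Qdist_triangle: "Qdist Q Q'' \<le> Qdist Q Q' + Qdist Q' Q''"
proof (rule Qdist_le)
  fix i a
  show "\<bar>Q i a - Q'' i a\<bar> \<le> Qdist Q Q' + Qdist Q' Q''"
    using Qdist_ge[of Q i a Q'] Qdist_ge[of Q' i a Q''] by linarith
qed

lemma Qlipschitz_abs_le: "Qlipschitz \<rho> F \<Longrightarrow> \<bar>F Q i a - F Q' i a\<bar> \<le> \<rho> * Qdist Q Q'"
  unfolding Qlipschitz_def using Qdist_ge order_trans by blast

lemma Qlipschitz_abs_growth:
  "Qlipschitz \<rho> F \<Longrightarrow> \<bar>F Q i a\<bar> \<le> Qnorm (F (\<lambda>_ _. 0)) + \<rho> * Qnorm Q"
  using Qlipschitz_abs_le[of \<rho> F Q i a "\<lambda>_ _. 0"] Qnorm_ge[of "F (\<lambda>_ _. 0)" i a]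
  by (simp add: Qdist_def)

lemma infnorm_le_cart: "(\<And>k. \<bar>v $ k\<bar> \<le> B) \<Longrightarrow> infnorm (v :: real ^ 'n) \<le> B"
  unfolding infnorm_cart by (rule cSup_least) auto

lemma infnorm_vfun_diff_le: "infnorm (vfun Q - vfun Q') \<le> Qdist Q Q'"
proof (rule infnorm_le_cart)
  fix k
  have "Min (range (Q k)) \<in> range (Q k)" "Min (range (Q' k)) \<in> range (Q' k)"
    by (auto intro: Min_in)
  then obtain a0 a1 where a0: "Min (range (Q k)) = Q k a0" and a1: "Min (range (Q' k)) = Q' k a1"
    by blast
  have "Q' k a1 \<le> Q' k a0" "Q k a0 \<le> Q k a1"
    unfolding a0[symmetric] a1[symmetric] by (auto intro: Min_le)
  then show "\<bar>(vfun Q - vfun Q') $ k\<bar> \<le> Qdist Q Q'"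
    unfolding vfun_def using a0 a1 Qdist_ge[of Q k a0 Q'] Qdist_ge[of Q k a1 Q']
    by (simp add: abs_le_iff)
qed

lemma infnorm_vfun_le:
  fixes Q :: "'s::finite \<Rightarrow> 'a::finite \<Rightarrow> real"
  shows "infnorm (vfun Q) \<le> Qnorm Q"
proof -
  have "vfun (\<lambda>(_::'s) (_::'a). 0::real) = 0"
    by (simp add: vfun_def vec_eq_iff)
  then show ?thesis
    using infnorm_vfun_diff_le[of Q "\<lambda>_ _. 0"] by (simp add: Qdist_def)
qed

lemma abs_vfun_le: "\<bar>vfun Q $ k\<bar> \<le> Qnorm Q"
  using component_le_infnorm_cart infnorm_vfun_le order_trans by blast

lemma Qlipschitz_iterate_dist:
  assumes F: "Qlipschitz \<rho> F" and \<rho>: "0 \<le> \<rho>" "\<rho> < 1"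
  shows "Qdist ((F ^^ (n + k)) Q) ((F ^^ n) Q) \<le> \<rho> ^ n * Qdist (F Q) Q / (1 - \<rho>)"
proof -
  let ?x = "\<lambda>n. (F ^^ n) Q" and ?d = "Qdist (F Q) Q"
  have step: "Qdist (?x (Suc n)) (?x n) \<le> \<rho> ^ n * ?d" for n
  proof (induction n)
    case (Suc n)
    have "Qdist (?x (Suc (Suc n))) (?x (Suc n)) \<le> \<rho> * Qdist (?x (Suc n)) (?x n)"
      using F unfolding Qlipschitz_def by simp
    also have "\<dots> \<le> \<rho> * (\<rho> ^ n * ?d)"
      using Suc \<rho> by (intro mult_left_mono) auto
    finally show ?case by simp
  qed simp
  have "Qdist (?x (n + k)) (?x n) \<le> (1 - \<rho> ^ k) * \<rho> ^ n * ?d / (1 - \<rho>)" for k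
  proof (induction k)
    case (Suc k)
    have "Qdist (?x (n + Suc k)) (?x n) \<le> \<rho> ^ (n + k) * ?d + (1 - \<rho> ^ k) * \<rho> ^ n * ?d / (1 - \<rho>)"
      using Qdist_triangle[of "?x (Suc (n + k))" "?x n" "?x (n + k)"] step[of "n + k"] Suc by simp
    also have "\<dots> = (1 - \<rho> ^ Suc k) * \<rho> ^ n * ?d / (1 - \<rho>)"
      using \<rho> by (simp add: field_simps power_add)
    finally show ?case .
  qed simp
  also have "(1 - \<rho> ^ k) * \<rho> ^ n * ?d / (1 - \<rho>) \<le> \<rho> ^ n * ?d / (1 - \<rho>)"
    using \<rho> Qdist_nonneg[of "F Q" Q] mult_left_le_one_le[of "\<rho> ^ n" "1 - \<rho> ^ k"]
    by (intro divide_right_mono mult_right_mono) (auto simp: power_le_one)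
  finally show ?thesis .
qed

lemma Qlipschitz_has_fixpoint:
  assumes F: "Qlipschitz \<rho> F" and \<rho>: "0 \<le> \<rho>" "\<rho> < 1"
  shows "\<exists>L. F L = L"
proof -
  define x where "x n = (F ^^ n) (\<lambda>_ _. 0)" for n
  define C where "C = Qdist (F (\<lambda>_ _. 0)) (\<lambda>_ _. 0) / (1 - \<rho>)"
  define L where "L i a = lim (\<lambda>n. x n i a)" for i a
  have close: "\<bar>x m i a - x n i a\<bar> \<le> \<rho> ^ n * C" if "n \<le> m" for m n i a
    using Qlipschitz_iterate_dist[OF F \<rho>, of n "m - n" "\<lambda>_ _. 0"] Qdist_ge[of "x m" i a "x n"] that
    unfolding x_def C_def by simp
  have L: "(\<lambda>n. x n i a) \<longlonglongrightarrow> L i a" and L_close: "\<bar>L i a - x n i a\<bar> \<le> \<rho> ^ n * C" for n i a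
    unfolding L_def by (rule geometric_Cauchy_tendsto_lim[OF \<rho> close]; assumption)+
  \<comment> \<open>\<open>F L\<close> is \<open>\<rho>\<close>-close to \<open>F (x n) = x (n + 1)\<close>, so \<open>F L\<close> and \<open>L\<close> are both limits of \<open>x (n + 1)\<close>\<close>
  have close_Suc: "norm (x (Suc n) i a - F L i a) \<le> \<rho> * (\<rho> ^ n * C)" for n i a
  proof -
    have "Qdist L (x n) \<le> \<rho> ^ n * C"
      by (rule Qdist_le) (rule L_close)
    then have "\<bar>F L i a - F (x n) i a\<bar> \<le> \<rho> * (\<rho> ^ n * C)"
      using Qlipschitz_abs_le[OF F, of L i a "x n"] \<rho>(1) by (meson mult_left_mono order_trans)
    moreover have "F (x n) = x (Suc n)"
      by (simp add: x_def)
    ultimately show ?thesis by (simp add: abs_minus_commute)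
  qed
  have "(\<lambda>n. \<rho> * (\<rho> ^ n * C)) \<longlonglongrightarrow> 0"
    using LIMSEQ_power_zero[of \<rho>] \<rho> by (intro tendsto_mult_right_zero tendsto_mult_left_zero) auto
  then have "(\<lambda>n. x (Suc n) i a - F L i a) \<longlonglongrightarrow> 0" for i a
    by (rule Lim_null_comparison[OF always_eventually[OF allI[OF close_Suc]]])
  then have "(\<lambda>n. x (Suc n) i a) \<longlonglongrightarrow> F L i a" for i a
    by (simp add: LIM_zero_iff)
  then have "F L i a = L i a" for i a
    using LIMSEQ_unique LIMSEQ_Suc[OF L] by blast
  then show ?thesis by blast
qed

lemma Qlipschitz_fixpoint_dist:
  assumes F: "Qlipschitz \<rho> F" and \<rho>: "\<rho> < 1" and L: "F L = L"
  shows "Qdist L Q \<le> Qdist (F Q) Q / (1 - \<rho>)"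
proof -
  have "Qdist L Q \<le> Qdist (F L) (F Q) + Qdist (F Q) Q"
    using Qdist_triangle[of "F L" Q "F Q"] L by simp
  also have "\<dots> \<le> \<rho> * Qdist L Q + Qdist (F Q) Q"
    using F unfolding Qlipschitz_def by simp
  finally show ?thesis
    using \<rho> by (simp add: field_simps)
qed

section \<open>Support functions and the proxy confidence regions\<close>

lemma abs_inner_le_norm1_infnorm: "\<bar>z \<bullet> v\<bar> \<le> norm1 z * infnorm (v :: real ^ 'n::finite)"
proof -
  have "\<bar>z \<bullet> v\<bar> = \<bar>\<Sum>k\<in>UNIV. z $ k * v $ k\<bar>"
    by (simp add: inner_vec_def)
  also have "\<dots> \<le> (\<Sum>k\<in>UNIV. \<bar>z $ k\<bar> * infnorm v)"
    by (rule order_trans[OF sum_abs])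
       (auto intro!: sum_mono mult_left_mono component_le_infnorm_cart simp: abs_mult)
  also have "\<dots> = norm1 z * infnorm v"
    by (simp add: norm1_def sum_distrib_right)
  finally show ?thesis .
qed

lemma norm1_triangle: "norm1 (x + y) \<le> norm1 x + norm1 (y :: real ^ 'n::finite)"
  unfolding norm1_def by (simp add: sum.distrib[symmetric] sum_mono abs_triangle_ineq)

lemma norm1_nonneg: "0 \<le> norm1 x"
  unfolding norm1_def by (simp add: sum_nonneg)

lemma norm1_le_card_norm: "norm1 (x :: real ^ 'n::finite) \<le> real CARD('n) * norm x"
proof -
  have "norm1 x \<le> (\<Sum>k\<in>(UNIV::'n set). norm x)"
    unfolding norm1_def by (intro sum_mono) (metis component_le_norm_cart)
  then show ?thesis by simp
qed

lemma norm1_prob_simplex: "x \<in> prob_simplex \<Longrightarrow> norm1 x = 1"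
  unfolding prob_simplex_def norm1_def by simp

lemma support_fun_upper: "compact S \<Longrightarrow> s \<in> S \<Longrightarrow> s \<bullet> v \<le> support_fun S v"
  unfolding support_fun_def
proof (rule cSUP_upper)
  assume "compact S"
  then obtain B where B: "\<forall>x\<in>S. norm x \<le> B"
    using compact_imp_bounded bounded_iff by blast
  have "s \<bullet> v \<le> B * norm v" if "s \<in> S" for s
    using norm_cauchy_schwarz[of s v] B that mult_right_mono[of "norm s" B "norm v"] by force
  then show "bdd_above ((\<lambda>s. s \<bullet> v) ` S)"
    by (rule bdd_aboveI2)
qed

lemma support_fun_least: "S \<noteq> {} \<Longrightarrow> (\<And>s. s \<in> S \<Longrightarrow> s \<bullet> v \<le> B) \<Longrightarrow> support_fun S v \<le> B"
  unfolding support_fun_def by (rule cSUP_least) auto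

lemma INF_norm1_le_beta_ia:
  fixes Uhat :: "(real ^ 'n::finite) set"
  assumes U: "U \<noteq> {}" and Uhat: "compact Uhat" and y: "y \<in> Uhat"
  shows "(INF x\<in>U. norm1 (y - x)) \<le> beta_ia Uhat U"
  unfolding beta_ia_def
proof (rule cSUP_upper[OF y])
  obtain x0 where x0: "x0 \<in> U" using U by blast
  obtain B where B: "\<forall>x\<in>Uhat. norm x \<le> B"
    using compact_imp_bounded[OF Uhat] bounded_iff by blast
  show "bdd_above ((\<lambda>y. INF x\<in>U. norm1 (y - x)) ` Uhat)"
  proof (rule bdd_aboveI2)
    fix y assume y: "y \<in> Uhat"
    have "(INF x\<in>U. norm1 (y - x)) \<le> norm1 (y - x0)"
      by (rule cINF_lower) (auto intro: x0 bdd_belowI2[where m=0] norm1_nonneg)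
    also have "\<dots> \<le> norm1 y + norm1 (- x0)"
      using norm1_triangle[of y "- x0"] by simp
    also have "norm1 y \<le> real CARD('n) * B"
      using norm1_le_card_norm[of y] B y by (meson mult_left_mono of_nat_0_le_iff order_trans)
    finally show "(INF x\<in>U. norm1 (y - x)) \<le> real CARD('n) * B + norm1 (- x0)"
      by simp
  qed
qed

lemma beta_ia_nonneg:
  assumes "U \<noteq> {}" and "compact Uhat" and "Uhat \<noteq> {}"
  shows "0 \<le> beta_ia Uhat U"
proof -
  obtain y where y: "y \<in> Uhat" using assms(3) by blast
  have "0 \<le> (INF x\<in>U. norm1 (y - x))"
    using assms(1) by (intro cINF_greatest norm1_nonneg) auto
  also have "\<dots> \<le> beta_ia Uhat U"
    by (rule INF_norm1_le_beta_ia[OF assms(1,2) y])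
  finally show ?thesis .
qed

lemma norm1_translate_le_beta_ia:
  fixes p :: "real ^ 'n::finite"
  assumes U: "U \<noteq> {}" and Uhat: "compact Uhat" and y: "y \<in> Uhat"
    and P: "(\<lambda>x. p + x) ` U \<subseteq> prob_simplex"
  shows "norm1 (p + y) \<le> 1 + beta_ia Uhat U"
proof -
  have "norm1 (p + y) - 1 \<le> (INF x\<in>U. norm1 (y - x))"
  proof (rule cINF_greatest[OF U])
    fix x assume x: "x \<in> U"
    have "norm1 (p + x) = 1"
      using P x by (intro norm1_prob_simplex) auto
    moreover have "norm1 (p + y) \<le> norm1 (p + x) + norm1 (y - x)"
      using norm1_triangle[of "p + x" "y - x"] by simp
    ultimately show "norm1 (p + y) - 1 \<le> norm1 (y - x)" by simp
  qed
  also have "\<dots> \<le> beta_ia Uhat U"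
    by (rule INF_norm1_le_beta_ia[OF U Uhat y])
  finally show ?thesis by simp
qed

lemma support_fun_translate_le:
  fixes p :: "real ^ 'n::finite"
  assumes U: "U \<noteq> {}" and Uhat: "compact Uhat" and sub: "U \<subseteq> Uhat"
  shows "support_fun ((\<lambda>x. p + x) ` U) v \<le> support_fun Uhat v + p \<bullet> v"
proof (rule support_fun_least)
  show "(\<lambda>x. p + x) ` U \<noteq> {}" using U by simp
  fix s assume "s \<in> (\<lambda>x. p + x) ` U"
  then obtain x where x: "x \<in> U" "s = p + x" by blast
  have "x \<bullet> v \<le> support_fun Uhat v"
    using sub x by (intro support_fun_upper[OF Uhat]) auto
  then show "s \<bullet> v \<le> support_fun Uhat v + p \<bullet> v"
    using x by (simp add: inner_add_left)
qed

lemma support_fun_translate_ge: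
  fixes p :: "real ^ 'n::finite"
  assumes U: "U \<noteq> {}" "compact U" and Uhat: "compact Uhat" "Uhat \<noteq> {}"
  shows "support_fun Uhat v + p \<bullet> v \<le> support_fun ((\<lambda>x. p + x) ` U) v + beta_ia Uhat U * infnorm v"
proof -
  let ?H = "support_fun ((\<lambda>x. p + x) ` U) v"
  have cU: "compact ((\<lambda>x. p + x) ` U)"
    using compact_translation[OF U(2), of p] by simp
  have "y \<bullet> v \<le> ?H - p \<bullet> v + beta_ia Uhat U * infnorm v" if y: "y \<in> Uhat" for y
  proof -
    have dist: "(p + y) \<bullet> v - ?H \<le> norm1 (y - x) * infnorm v" if x: "x \<in> U" for x
    proof -
      have "(p + x) \<bullet> v \<le> ?H"
        using x by (intro support_fun_upper[OF cU]) auto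
      moreover have "(y - x) \<bullet> v \<le> norm1 (y - x) * infnorm v"
        using abs_inner_le_norm1_infnorm[of "y - x" v] by simp
      ultimately show ?thesis
        by (simp add: inner_diff_left inner_add_left algebra_simps)
    qed
    have "(p + y) \<bullet> v - ?H \<le> beta_ia Uhat U * infnorm v"
    proof (cases "infnorm v = 0")
      case True
      obtain x where "x \<in> U" using U by blast
      then show ?thesis using dist[of x] True by simp
    next
      case False
      then have v: "infnorm v > 0"
        using infnorm_pos_le[of v] by simp
      have "((p + y) \<bullet> v - ?H) / infnorm v \<le> (INF x\<in>U. norm1 (y - x))"
        using dist v by (intro cINF_greatest[OF U(1)]) (simp add: divide_le_eq)
      also have "\<dots> \<le> beta_ia Uhat U"
        by (rule INF_norm1_le_beta_ia[OF U(1) Uhat(1) y])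
      finally show ?thesis
        using v by (simp add: divide_le_eq)
    qed
    then show ?thesis by (simp add: inner_add_left)
  qed
  then have "support_fun Uhat v \<le> ?H - p \<bullet> v + beta_ia Uhat U * infnorm v"
    by (rule support_fun_least[OF Uhat(2)])
  then show ?thesis by simp
qed

lemma support_fun_proxy_lipschitz:
  fixes p :: "real ^ 'n::finite"
  assumes U: "U \<noteq> {}" and Uhat: "compact Uhat" "Uhat \<noteq> {}"
    and P: "(\<lambda>x. p + x) ` U \<subseteq> prob_simplex"
  shows "support_fun Uhat v + p \<bullet> v \<le> support_fun Uhat w + p \<bullet> w + (1 + beta_ia Uhat U) * infnorm (v - w)"
proof -
  have "y \<bullet> v \<le> support_fun Uhat w + p \<bullet> w - p \<bullet> v + (1 + beta_ia Uhat U) * infnorm (v - w)"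
    if y: "y \<in> Uhat" for y
  proof -
    have "(p + y) \<bullet> (v - w) \<le> norm1 (p + y) * infnorm (v - w)"
      using abs_inner_le_norm1_infnorm[of "p + y" "v - w"] by simp
    also have "\<dots> \<le> (1 + beta_ia Uhat U) * infnorm (v - w)"
      using norm1_translate_le_beta_ia[OF U Uhat(1) y P] by (intro mult_right_mono infnorm_pos_le)
    finally show ?thesis
      using support_fun_upper[OF Uhat(1) y, of w] by (simp add: inner_diff_right inner_add_left)
  qed
  then have "support_fun Uhat v \<le> support_fun Uhat w + p \<bullet> w - p \<bullet> v + (1 + beta_ia Uhat U) * infnorm (v - w)"
    by (rule support_fun_least[OF Uhat(2)])
  then show ?thesis by simp
qed

section \<open>The proxy Bellman operator\<close>

text \<open>The iteration's update has conditional mean \<open>proxy_bellman\<close>: the sampled term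
  \<open>v(j)\<close> with \<open>j \<sim> p\<^sub>i\<^sup>a\<close> has expectation \<open>p\<^sub>i\<^sup>a \<bullet> v\<close>.\<close>
definition proxy_bellman ::
  "('s::finite \<Rightarrow> 'a::finite \<Rightarrow> real) \<Rightarrow> real \<Rightarrow> ('s \<Rightarrow> 'a \<Rightarrow> (real ^ 's) set) \<Rightarrow>
   ('s \<Rightarrow> 'a \<Rightarrow> 's pmf) \<Rightarrow> ('s \<Rightarrow> 'a \<Rightarrow> real) \<Rightarrow> 's \<Rightarrow> 'a \<Rightarrow> real" where
  "proxy_bellman c \<theta> Uhat p Q i a =
     c i a + \<theta> * (support_fun (Uhat i a) (vfun Q) + pmf_vec (p i a) \<bullet> vfun Q)"

lemma Qlipschitz_proxy_bellman:
  fixes Uhat :: "'s::finite \<Rightarrow> 'a::finite \<Rightarrow> (real ^ 's) set"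
  assumes U: "\<And>i a. U i a \<noteq> {}" and Uhat: "\<And>i a. compact (Uhat i a)" "\<And>i a. Uhat i a \<noteq> {}"
    and P: "\<And>i a. (\<lambda>x. pmf_vec (p i a) + x) ` U i a \<subseteq> prob_simplex"
    and \<beta>: "\<And>i a. beta_ia (Uhat i a) (U i a) \<le> \<beta>" and \<theta>: "0 \<le> \<theta>"
  shows "Qlipschitz (\<theta> * (1 + \<beta>)) (proxy_bellman c \<theta> Uhat p)"
  unfolding Qlipschitz_def
proof (intro allI Qdist_le)
  fix Q Q' :: "'s \<Rightarrow> 'a \<Rightarrow> real" and i a
  let ?G = "\<lambda>v. support_fun (Uhat i a) v + pmf_vec (p i a) \<bullet> v" and ?b = "beta_ia (Uhat i a) (U i a)"
  have "(1 + ?b) * infnorm (vfun Q - vfun Q') \<le> (1 + \<beta>) * Qdist Q Q'"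
    using \<beta>[of i a] beta_ia_nonneg[OF U Uhat, of i a i a] infnorm_vfun_diff_le[of Q Q']
    by (intro mult_mono infnorm_pos_le) auto
  moreover have "infnorm (vfun Q' - vfun Q) = infnorm (vfun Q - vfun Q')"
    by (rule infnorm_sub)
  ultimately have "\<bar>?G (vfun Q) - ?G (vfun Q')\<bar> \<le> (1 + \<beta>) * Qdist Q Q'"
    using support_fun_proxy_lipschitz[OF U[of i a] Uhat(1)[of i a] Uhat(2)[of i a] P[of i a], where v="vfun Q" and w="vfun Q'"]
      support_fun_proxy_lipschitz[OF U[of i a] Uhat(1)[of i a] Uhat(2)[of i a] P[of i a], where v="vfun Q'" and w="vfun Q"]
    by (simp add: abs_le_iff)
  then have "\<theta> * \<bar>?G (vfun Q) - ?G (vfun Q')\<bar> \<le> \<theta> * (1 + \<beta>) * Qdist Q Q'"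
    using \<theta> by (simp add: mult_left_mono mult.assoc)
  then show "\<bar>proxy_bellman c \<theta> Uhat p Q i a - proxy_bellman c \<theta> Uhat p Q' i a\<bar>
      \<le> \<theta> * (1 + \<beta>) * Qdist Q Q'"
    using \<theta> by (simp add: proxy_bellman_def abs_mult right_diff_distrib[symmetric])
qed

lemma proxy_bellman_dist_robust:
  assumes U: "\<And>i a. U i a \<noteq> {}" "\<And>i a. compact (U i a)"
    and Uhat: "\<And>i a. compact (Uhat i a)" "\<And>i a. Uhat i a \<noteq> {}"
    and sub: "\<And>i a. U i a \<subseteq> Uhat i a"
    and \<beta>: "\<And>i a. beta_ia (Uhat i a) (U i a) \<le> \<beta>" and \<theta>: "0 \<le> \<theta>"
    and Qstar: "\<And>i a. Qstar i a = c i a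
                  + \<theta> * support_fun ((\<lambda>x. pmf_vec (p i a) + x) ` U i a) (vfun Qstar)"
  shows "Qdist (proxy_bellman c \<theta> Uhat p Qstar) Qstar \<le> \<theta> * \<beta> * Qnorm Qstar"
proof (rule Qdist_le)
  fix i a
  let ?G = "support_fun (Uhat i a) (vfun Qstar) + pmf_vec (p i a) \<bullet> vfun Qstar"
    and ?H = "support_fun ((\<lambda>x. pmf_vec (p i a) + x) ` U i a) (vfun Qstar)"
  have "beta_ia (Uhat i a) (U i a) * infnorm (vfun Qstar) \<le> \<beta> * Qnorm Qstar"
    using \<beta>[of i a] beta_ia_nonneg[OF U(1) Uhat, of i a i a] infnorm_vfun_le[of Qstar]
    by (intro mult_mono infnorm_pos_le) auto
  then have "\<bar>?G - ?H\<bar> \<le> \<beta> * Qnorm Qstar"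
    using support_fun_translate_le[OF U(1)[of i a] Uhat(1)[of i a] sub[of i a], where p="pmf_vec (p i a)" and v="vfun Qstar"]
      support_fun_translate_ge[OF U(1)[of i a] U(2)[of i a] Uhat(1)[of i a] Uhat(2)[of i a], where p="pmf_vec (p i a)" and v="vfun Qstar"]
    by linarith
  then have "\<theta> * \<bar>?G - ?H\<bar> \<le> \<theta> * (\<beta> * Qnorm Qstar)"
    using \<theta> by (rule mult_left_mono)
  moreover have "proxy_bellman c \<theta> Uhat p Qstar i a - Qstar i a = \<theta> * (?G - ?H)"
    using Qstar[of i a] by (simp add: proxy_bellman_def algebra_simps)
  ultimately show "\<bar>proxy_bellman c \<theta> Uhat p Qstar i a - Qstar i a\<bar> \<le> \<theta> * \<beta> * Qnorm Qstar"
    using \<theta> by (simp add: abs_mult mult.assoc)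
qed

lemma proxy_fixpoint_dist_robust:
  assumes U: "\<And>i a. U i a \<noteq> {}" "\<And>i a. compact (U i a)"
    and Uhat: "\<And>i a. compact (Uhat i a)" "\<And>i a. Uhat i a \<noteq> {}"
    and sub: "\<And>i a. U i a \<subseteq> Uhat i a"
    and P: "\<And>i a. (\<lambda>x. pmf_vec (p i a) + x) ` U i a \<subseteq> prob_simplex"
    and \<beta>: "\<And>i a. beta_ia (Uhat i a) (U i a) \<le> \<beta>" and \<theta>: "0 \<le> \<theta>" "\<theta> * (1 + \<beta>) < 1"
    and Qstar: "\<And>i a. Qstar i a = c i a
                  + \<theta> * support_fun ((\<lambda>x. pmf_vec (p i a) + x) ` U i a) (vfun Qstar)"
    and fp: "proxy_bellman c \<theta> Uhat p Qf = Qf"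
  shows "Qdist Qf Qstar \<le> \<theta> * \<beta> / (1 - \<theta> * (1 + \<beta>)) * Qnorm Qstar"
proof -
  have "Qdist Qf Qstar \<le> Qdist (proxy_bellman c \<theta> Uhat p Qstar) Qstar / (1 - \<theta> * (1 + \<beta>))"
    by (rule Qlipschitz_fixpoint_dist[OF Qlipschitz_proxy_bellman[OF U(1) Uhat P \<beta> \<theta>(1)] \<theta>(2) fp])
  also have "\<dots> \<le> \<theta> * \<beta> * Qnorm Qstar / (1 - \<theta> * (1 + \<beta>))"
    using \<theta>(2) by (intro divide_right_mono proxy_bellman_dist_robust[OF U Uhat sub \<beta> \<theta>(1) Qstar]) simp
  finally show ?thesis by simp
qed

section \<open>Noise-corrected iteration\<close>

text \<open>Subtracting the accumulated noise \<open>Z\<close> turns the stochastic recursion into a perturbed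
  deterministic one.\<close>
definition noise_corrected ::
  "real \<Rightarrow> ('s::finite \<Rightarrow> 'a::finite \<Rightarrow> real) \<Rightarrow> ('s \<Rightarrow> 'a \<Rightarrow> 's \<Rightarrow> real) \<Rightarrow> 's \<Rightarrow> 'a \<Rightarrow> real" where
  "noise_corrected \<theta> Q Z i a = Q i a - \<theta> * (\<Sum>k\<in>UNIV. vfun Q $ k * Z i a k)"

lemma Qdist_noise_corrected_le:
  fixes Q :: "'s::finite \<Rightarrow> 'a::finite \<Rightarrow> real" and \<theta> z :: real
  assumes \<theta>: "0 \<le> \<theta>" and Z: "\<And>i a k. \<bar>Z i a k\<bar> \<le> z"
  shows "Qdist Q (noise_corrected \<theta> Q Z) \<le> \<theta> * CARD('s) * Qnorm Q * z"
proof (rule Qdist_le)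
  fix i a
  have "\<bar>\<Sum>k\<in>UNIV. vfun Q $ k * Z i a k\<bar> \<le> CARD('s) * Qnorm Q * z"
    using abs_vfun_le Z by (rule abs_sum_mult_le_card)
  then show "\<bar>Q i a - noise_corrected \<theta> Q Z i a\<bar> \<le> \<theta> * CARD('s) * Qnorm Q * z"
    using \<theta> by (simp add: noise_corrected_def abs_mult mult.assoc mult_left_mono)
qed

lemma Qnorm_le_noise_corrected:
  fixes Q :: "'s::finite \<Rightarrow> 'a::finite \<Rightarrow> real" and \<theta> z :: real
  assumes \<theta>: "0 \<le> \<theta>" and Z: "\<And>i a k. \<bar>Z i a k\<bar> \<le> z" and small: "\<theta> * CARD('s) * z \<le> 1/2"
  shows "Qnorm Q \<le> 2 * (Qdist (noise_corrected \<theta> Q Z) Qf + Qnorm Qf)"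
proof -
  have "Qnorm Q \<le> Qdist Q (noise_corrected \<theta> Q Z) + Qdist (noise_corrected \<theta> Q Z) Qf + Qnorm Qf"
    using Qdist_triangle[of Q "\<lambda>_ _. 0" "noise_corrected \<theta> Q Z"]
      Qdist_triangle[of "noise_corrected \<theta> Q Z" "\<lambda>_ _. 0" Qf] by simp
  moreover have "\<theta> * CARD('s) * Qnorm Q * z \<le> Qnorm Q / 2"
    using mult_left_mono[OF small Qnorm_nonneg[of Q]] by (simp add: algebra_simps)
  moreover have "Qdist Q (noise_corrected \<theta> Q Z) \<le> \<theta> * CARD('s) * Qnorm Q * z"
    using \<theta> Z by (rule Qdist_noise_corrected_le)
  ultimately show ?thesis by simp
qed

lemma Qdist_le_noise_corrected:
  fixes Q :: "'s::finite \<Rightarrow> 'a::finite \<Rightarrow> real" and \<theta> z :: real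
  assumes \<theta>: "0 \<le> \<theta>" and Z: "\<And>i a k. \<bar>Z i a k\<bar> \<le> z" and small: "\<theta> * CARD('s) * z \<le> 1/2"
  shows "Qdist Q Qf \<le> Qdist (noise_corrected \<theta> Q Z) Qf
    + \<theta> * CARD('s) * z * (2 * (Qdist (noise_corrected \<theta> Q Z) Qf + Qnorm Qf))"
proof -
  have "0 \<le> \<theta> * CARD('s) * z"
    using \<theta> Z[of undefined undefined undefined] by simp
  moreover have "Qnorm Q \<le> 2 * (Qdist (noise_corrected \<theta> Q Z) Qf + Qnorm Qf)"
    using \<theta> Z small by (rule Qnorm_le_noise_corrected)
  ultimately have "\<theta> * CARD('s) * z * Qnorm Q
      \<le> \<theta> * CARD('s) * z * (2 * (Qdist (noise_corrected \<theta> Q Z) Qf + Qnorm Qf))"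
    by (rule mult_left_mono[rotated])
  moreover have "Qdist Q (noise_corrected \<theta> Q Z) \<le> \<theta> * CARD('s) * Qnorm Q * z"
    using \<theta> Z by (rule Qdist_noise_corrected_le)
  ultimately show ?thesis
    using Qdist_triangle[of Q Qf "noise_corrected \<theta> Q Z"] by (simp add: mult_ac)
qed

lemma noise_corrected_step_eq:
  fixes Q Q' :: "'s::finite \<Rightarrow> 'a::finite \<Rightarrow> real"
  assumes Q': "\<And>i a. Q' i a = (1 - g) * Q i a + g * (P i a + \<theta> * (\<Sum>k\<in>UNIV. vfun Q $ k * e i a k))"
  shows "noise_corrected \<theta> Q' (\<lambda>i a k. (1 - g) * Z i a k + g * e i a k) i a - Qf i a
     = (1 - g) * (noise_corrected \<theta> Q Z i a - Qf i a) + g * (P i a - Qf i a)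
       + \<theta> * g * (\<Sum>k\<in>UNIV. (vfun Q $ k - vfun Q' $ k) * e i a k)
       + \<theta> * (1 - g) * (\<Sum>k\<in>UNIV. (vfun Q $ k - vfun Q' $ k) * Z i a k)"
proof -
  let ?S = "\<lambda>P x. \<Sum>k\<in>UNIV. vfun P $ k * x k"
  have "?S Q' (\<lambda>k. (1 - g) * Z i a k + g * e i a k) = (1 - g) * ?S Q' (Z i a) + g * ?S Q' (e i a)"
    by (simp add: distrib_left sum.distrib sum_distrib_left mult.left_commute)
  then have new: "noise_corrected \<theta> Q' (\<lambda>i a k. (1 - g) * Z i a k + g * e i a k) i a
      = Q' i a - \<theta> * ((1 - g) * ?S Q' (Z i a) + g * ?S Q' (e i a))"
    by (simp add: noise_corrected_def)
  have diff: "(\<Sum>k\<in>UNIV. (vfun Q $ k - vfun Q' $ k) * x k) = ?S Q x - ?S Q' x" for x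
    by (simp add: left_diff_distrib sum_subtractf)
  have old: "noise_corrected \<theta> Q Z i a = Q i a - \<theta> * ?S Q (Z i a)"
    by (simp add: noise_corrected_def)
  show ?thesis
    unfolding new old diff Q' by algebra
qed

lemma Qdist_noisy_step_le:
  fixes F :: "('s::finite \<Rightarrow> 'a::finite \<Rightarrow> real) \<Rightarrow> 's \<Rightarrow> 'a \<Rightarrow> real" and \<theta> g C :: real
  assumes F: "Qlipschitz \<rho> F" and \<rho>: "\<rho> \<le> 1" and \<theta>: "0 \<le> \<theta>" and g: "0 \<le> g"
    and e: "\<And>i a k. \<bar>e i a k\<bar> \<le> 1"
    and C: "Qnorm (F (\<lambda>_ _. 0)) + 2 + \<theta> * CARD('s) \<le> C"
    and Q': "\<And>i a. Q' i a = (1 - g) * Q i a + g * (F Q i a + \<theta> * (\<Sum>k\<in>UNIV. vfun Q $ k * e i a k))"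
  shows "Qdist Q' Q \<le> g * C * (1 + Qnorm Q)"
proof (rule Qdist_le)
  fix i a
  let ?q = "Qnorm Q" and ?S = "\<Sum>k\<in>UNIV. vfun Q $ k * e i a k"
  have "0 \<le> \<theta> * CARD('s)"
    using \<theta> by simp
  have "\<bar>?S\<bar> \<le> CARD('s) * ?q * 1"
    using abs_vfun_le e by (rule abs_sum_mult_le_card)
  then have "\<theta> * \<bar>?S\<bar> \<le> \<theta> * CARD('s) * ?q"
    using \<theta> by (simp add: mult_left_mono mult.assoc)
  moreover have "\<bar>F Q i a\<bar> \<le> Qnorm (F (\<lambda>_ _. 0)) + ?q"
    using Qlipschitz_abs_growth[OF F, of Q i a] \<rho> Qnorm_nonneg[of Q] mult_right_mono[of \<rho> 1 ?q]
    by linarith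
  moreover have "(2 + \<theta> * CARD('s)) * ?q \<le> C * ?q"
    using C Qnorm_nonneg[of "F (\<lambda>_ _. 0)"] Qnorm_nonneg[of Q] by (intro mult_right_mono) auto
  moreover have "\<bar>F Q i a - Q i a + \<theta> * ?S\<bar> \<le> \<bar>F Q i a\<bar> + \<bar>Q i a\<bar> + \<theta> * \<bar>?S\<bar>"
    using \<theta> abs_mult[of \<theta> ?S] by (smt (verit))
  ultimately have "\<bar>F Q i a - Q i a + \<theta> * ?S\<bar> \<le> C * (1 + ?q)"
    using Qnorm_ge[of Q i a] C \<open>0 \<le> \<theta> * CARD('s)\<close> by (simp add: algebra_simps)
  moreover have "Q' i a - Q i a = g * (F Q i a - Q i a + \<theta> * ?S)"
    by (simp add: Q' algebra_simps)
  ultimately show "\<bar>Q' i a - Q i a\<bar> \<le> g * C * (1 + ?q)"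
    using g by (simp add: abs_mult mult.assoc mult_left_mono)
qed

lemma noise_corrected_step_le:
  fixes F :: "('s::finite \<Rightarrow> 'a::finite \<Rightarrow> real) \<Rightarrow> 's \<Rightarrow> 'a \<Rightarrow> real" and \<theta> g C z :: real
  assumes F: "Qlipschitz \<rho> F" and \<rho>: "0 \<le> \<rho>" "\<rho> \<le> 1" and fp: "F Qf = Qf"
    and \<theta>: "0 \<le> \<theta>" and g: "0 \<le> g" "g \<le> 1"
    and e: "\<And>i a k. \<bar>e i a k\<bar> \<le> 1" and Z: "\<And>i a k. \<bar>Z i a k\<bar> \<le> z"
    and C: "Qnorm (F (\<lambda>_ _. 0)) + 2 + \<theta> * CARD('s) \<le> C"
    and Q': "\<And>i a. Q' i a = (1 - g) * Q i a + g * (F Q i a + \<theta> * (\<Sum>k\<in>UNIV. vfun Q $ k * e i a k))"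
  shows "Qdist (noise_corrected \<theta> Q' (\<lambda>i a k. (1 - g) * Z i a k + g * e i a k)) Qf
    \<le> (1 - g * (1 - \<rho>)) * Qdist (noise_corrected \<theta> Q Z) Qf
       + g * (\<theta> * CARD('s) * C * (2 * z + g)) * (1 + Qnorm Q)"
proof (rule Qdist_le)
  fix i a
  let ?R = "noise_corrected \<theta> Q Z" and ?N = "real CARD('s)" and ?q = "Qnorm Q"
  let ?d = "Qdist ?R Qf" and ?D = "g * C * (1 + ?q)"
  have z: "0 \<le> z" using Z[of i a i] by simp
  have q: "0 \<le> ?q" by (rule Qnorm_nonneg)
  have "0 \<le> \<theta> * ?N" using \<theta> by simp
  then have C1: "1 \<le> C" using C Qnorm_nonneg[of "F (\<lambda>_ _. 0)"] by linarith
  have QR: "Qdist Q ?R \<le> \<theta> * ?N * ?q * z"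
    using \<theta> Z by (rule Qdist_noise_corrected_le)
  have "\<bar>F Q i a - Qf i a\<bar> \<le> \<rho> * Qdist Q Qf"
    using Qlipschitz_abs_le[OF F, of Q i a Qf] fp by simp
  also have "\<dots> \<le> \<rho> * (\<theta> * ?N * ?q * z + ?d)"
    using Qdist_triangle[of Q Qf ?R] QR \<rho>(1)
    by (intro mult_left_mono) auto
  finally have FQ: "\<bar>F Q i a - Qf i a\<bar> \<le> \<rho> * (\<theta> * ?N * ?q * z) + \<rho> * ?d"
    by (simp add: algebra_simps)
  have "\<bar>vfun Q $ k - vfun Q' $ k\<bar> \<le> ?D" for k
    using component_le_infnorm_cart[of "vfun Q' - vfun Q" k] infnorm_vfun_diff_le[of Q' Q]
      Qdist_noisy_step_le[OF F \<rho>(2) \<theta> g(1) e C Q'] by (simp add: abs_minus_commute)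
  then have S: "\<bar>\<Sum>k\<in>UNIV. (vfun Q $ k - vfun Q' $ k) * e i a k\<bar> \<le> ?N * ?D * 1"
    "\<bar>\<Sum>k\<in>UNIV. (vfun Q $ k - vfun Q' $ k) * Z i a k\<bar> \<le> ?N * ?D * z"
    by (intro abs_sum_mult_le_card e Z; assumption)+
  have "\<bar>noise_corrected \<theta> Q' (\<lambda>i a k. (1 - g) * Z i a k + g * e i a k) i a - Qf i a\<bar>
      \<le> (1 - g) * ?d + g * (\<rho> * (\<theta> * ?N * ?q * z) + \<rho> * ?d)
         + \<theta> * g * (?N * ?D * 1) + \<theta> * (1 - g) * (?N * ?D * z)"
    unfolding noise_corrected_step_eq[OF Q']
    using Qdist_ge[of ?R i a Qf] FQ S g \<theta>
    by (intro abs_triangle_ineq[THEN order_trans] add_mono; simp add: abs_mult mult_left_mono mult_nonneg_nonneg)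
  also have "\<dots> \<le> (1 - g * (1 - \<rho>)) * ?d + g * (\<theta> * ?N * C * (2 * z + g)) * (1 + ?q)"
  proof -
    have "\<rho> * ?q * z \<le> C * (1 + ?q) * z"
      using \<rho> C1 q z by (intro mult_right_mono mult_mono) auto
    moreover have "(1 - g) * (C * (1 + ?q) * z) \<le> C * (1 + ?q) * z"
      using g C1 q z by (intro mult_left_le_one_le mult_nonneg_nonneg) auto
    ultimately have "\<rho> * ?q * z + g * (C * (1 + ?q)) + (1 - g) * (C * (1 + ?q) * z)
        \<le> C * (2 * z + g) * (1 + ?q)"
      by (simp add: algebra_simps)
    then have "g * (\<theta> * ?N) * (\<rho> * ?q * z + g * (C * (1 + ?q)) + (1 - g) * (C * (1 + ?q) * z))
        \<le> g * (\<theta> * ?N) * (C * (2 * z + g) * (1 + ?q))"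
      using g \<theta> by (intro mult_left_mono) auto
    then show ?thesis by (simp add: algebra_simps)
  qed
  finally show "\<bar>noise_corrected \<theta> Q' (\<lambda>i a k. (1 - g) * Z i a k + g * e i a k) i a - Qf i a\<bar>
      \<le> (1 - g * (1 - \<rho>)) * ?d + g * (\<theta> * ?N * C * (2 * z + g)) * (1 + ?q)" .
qed

lemma noise_corrected_step_contracting:
  fixes F :: "('s::finite \<Rightarrow> 'a::finite \<Rightarrow> real) \<Rightarrow> 's \<Rightarrow> 'a \<Rightarrow> real" and \<theta> g C z \<delta> :: real
  assumes F: "Qlipschitz \<rho> F" and \<rho>: "0 \<le> \<rho>" "\<rho> \<le> 1" and fp: "F Qf = Qf"
    and \<theta>: "0 \<le> \<theta>" and g: "0 \<le> g" "g \<le> 1"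
    and e: "\<And>i a k. \<bar>e i a k\<bar> \<le> 1" and Z: "\<And>i a k. \<bar>Z i a k\<bar> \<le> z"
    and C: "Qnorm (F (\<lambda>_ _. 0)) + 2 + \<theta> * CARD('s) \<le> C"
    and Q': "\<And>i a. Q' i a = (1 - g) * Q i a + g * (F Q i a + \<theta> * (\<Sum>k\<in>UNIV. vfun Q $ k * e i a k))"
    and \<delta>: "\<delta> = \<theta> * CARD('s) * C * (2 * z + g)"
    and small: "\<theta> * CARD('s) * z \<le> 1/2" "2 * \<delta> \<le> (1 - \<rho>) / 2"
  shows "Qdist (noise_corrected \<theta> Q' (\<lambda>i a k. (1 - g) * Z i a k + g * e i a k)) Qf
    \<le> (1 - (1 - \<rho>) / 2 * g) * Qdist (noise_corrected \<theta> Q Z) Qf + g * \<delta> * (1 + 2 * Qnorm Qf)"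
proof -
  let ?d = "Qdist (noise_corrected \<theta> Q Z) Qf"
  have "0 \<le> z" using Z[of undefined undefined undefined] by simp
  moreover have "0 \<le> \<theta> * CARD('s)" using \<theta> by simp
  moreover have "0 \<le> C" using C calculation(2) Qnorm_nonneg[of "F (\<lambda>_ _. 0)"] by linarith
  ultimately have "0 \<le> \<delta>"
    unfolding \<delta> using g \<theta> by (intro mult_nonneg_nonneg) auto
  moreover have "Qnorm Q \<le> 2 * (?d + Qnorm Qf)"
    using \<theta> Z small(1) by (rule Qnorm_le_noise_corrected)
  ultimately have "g * \<delta> * (1 + Qnorm Q) \<le> g * \<delta> * (1 + 2 * (?d + Qnorm Qf))"
    using g by (intro mult_left_mono) auto
  moreover have "g * (2 * \<delta>) * ?d \<le> g * ((1 - \<rho>) / 2) * ?d"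
    using small(2) g Qdist_nonneg by (intro mult_right_mono mult_left_mono) auto
  moreover have "Qdist (noise_corrected \<theta> Q' (\<lambda>i a k. (1 - g) * Z i a k + g * e i a k)) Qf
      \<le> (1 - g * (1 - \<rho>)) * ?d + g * \<delta> * (1 + Qnorm Q)"
    unfolding \<delta> using F \<rho> fp \<theta> g e Z C Q' by (rule noise_corrected_step_le)
  moreover have "(1 - g * (1 - \<rho>)) * ?d + g * \<delta> * (1 + 2 * (?d + Qnorm Qf))
      = (1 - (1 - \<rho>) / 2 * g) * ?d + g * \<delta> * (1 + 2 * Qnorm Qf) + (g * (2 * \<delta>) * ?d - g * ((1 - \<rho>) / 2) * ?d)"
    by (simp add: algebra_simps)
  ultimately show ?thesis
    by linarith
qed

lemma noise_corrected_tendsto_fixpoint: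
  fixes F :: "('s::finite \<Rightarrow> 'a::finite \<Rightarrow> real) \<Rightarrow> 's \<Rightarrow> 'a \<Rightarrow> real"
    and Q :: "nat \<Rightarrow> 's \<Rightarrow> 'a \<Rightarrow> real" and E Z :: "nat \<Rightarrow> 's \<Rightarrow> 'a \<Rightarrow> 's \<Rightarrow> real" and \<theta> :: real
  assumes F: "Qlipschitz \<rho> F" and \<rho>: "0 \<le> \<rho>" "\<rho> < 1" and fp: "F Qf = Qf" and \<theta>: "0 \<le> \<theta>"
    and g: "\<And>t. 0 \<le> g t" "\<not> summable g" "g \<longlonglongrightarrow> 0"
    and E: "\<And>t i a k. \<bar>E t i a k\<bar> \<le> 1"
    and Q: "\<And>t i a. Q (Suc t) i a = (1 - g t) * Q t i a
                        + g t * (F (Q t) i a + \<theta> * (\<Sum>k\<in>UNIV. vfun (Q t) $ k * E t i a k))"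
    and Z: "\<And>t. Z (Suc t) = (\<lambda>i a k. (1 - g t) * Z t i a k + g t * E t i a k)"
    and Z_le: "\<And>t i a k. \<bar>Z t i a k\<bar> \<le> z t" and z: "z \<longlonglongrightarrow> 0"
  shows "(\<lambda>t. Qdist (noise_corrected \<theta> (Q t) (Z t)) Qf) \<longlonglongrightarrow> 0"
proof -
  define x where "x t = Qdist (noise_corrected \<theta> (Q t) (Z t)) Qf" for t
  define C where "C = Qnorm (F (\<lambda>_ _. 0)) + 2 + \<theta> * CARD('s)"
  define \<delta> where "\<delta> t = \<theta> * CARD('s) * C * (2 * z t + g t)" for t
  define \<kappa> where "\<kappa> = (1 - \<rho>) / 2"
  have \<kappa>: "0 < \<kappa>"
    using \<rho>(2) by (simp add: \<kappa>_def)
  have \<delta>: "\<delta> \<longlonglongrightarrow> 0"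
    unfolding \<delta>_def using z g(3) by (intro tendsto_mult_right_zero) (simp add: tendsto_add_zero)
  then have lim: "(\<lambda>t. \<delta> t * (1 + 2 * Qnorm Qf) / \<kappa>) \<longlonglongrightarrow> 0"
    by (intro tendsto_divide_zero tendsto_mult_left_zero)
  have "(\<lambda>t. \<theta> * CARD('s) * z t) \<longlonglongrightarrow> 0" "(\<lambda>t. 2 * \<delta> t) \<longlonglongrightarrow> 0"
    using z \<delta> by (auto intro: tendsto_mult_right_zero)
  then have "eventually (\<lambda>t. \<theta> * CARD('s) * z t < 1/2) sequentially"
    "eventually (\<lambda>t. 2 * \<delta> t < \<kappa>) sequentially"
    using \<kappa> by (simp_all only: order_tendstoD(2) half_gt_zero zero_less_one)
  moreover have "eventually (\<lambda>t. g t < 1) sequentially"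
    using g(3) by (rule order_tendstoD(2)) simp
  ultimately have "eventually (\<lambda>t. 0 \<le> x t \<and> \<kappa> * g t \<le> 1 \<and>
      x (Suc t) \<le> (1 - \<kappa> * g t) * x t + \<kappa> * g t * (\<delta> t * (1 + 2 * Qnorm Qf) / \<kappa>)) sequentially"
  proof eventually_elim
    case (elim t)
    have C: "Qnorm (F (\<lambda>_ _. 0)) + 2 + \<theta> * CARD('s) \<le> C" and \<delta>_t: "\<delta> t = \<theta> * CARD('s) * C * (2 * z t + g t)"
      by (simp_all add: C_def \<delta>_def)
    from elim F \<rho>(1) less_imp_le[OF \<rho>(2)] fp \<theta> g(1)[of t] E[of t] Z_le[of t] C Q[of t] \<delta>_t
    have "x (Suc t) \<le> (1 - \<kappa> * g t) * x t + g t * \<delta> t * (1 + 2 * Qnorm Qf)"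
      unfolding x_def Z \<kappa>_def by (intro noise_corrected_step_contracting) auto
    moreover have "\<kappa> * g t \<le> 1"
      using elim g(1)[of t] \<rho> by (intro mult_le_one) (auto simp: \<kappa>_def)
    ultimately show ?case
      using \<kappa> by (simp add: x_def Qdist_nonneg)
  qed
  with \<kappa> g(1,2) lim show ?thesis
    unfolding x_def by (rule contracting_recursion_tendsto_zero)
qed

text \<open>The noise accumulated by an iteration with step lengths \<open>g\<close>: the same recursion as the
  iterate, driven by \<open>e\<close> alone.\<close>
primrec noise_avg :: "(nat \<Rightarrow> real) \<Rightarrow> (nat \<Rightarrow> real) \<Rightarrow> nat \<Rightarrow> real" where
  "noise_avg g e 0 = 0"
| "noise_avg g e (Suc t) = (1 - g t) * noise_avg g e t + g t * e t"

lemma noisy_iteration_tendsto_fixpoint: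
  fixes F :: "('s::finite \<Rightarrow> 'a::finite \<Rightarrow> real) \<Rightarrow> 's \<Rightarrow> 'a \<Rightarrow> real"
    and Q :: "nat \<Rightarrow> 's \<Rightarrow> 'a \<Rightarrow> real" and E :: "nat \<Rightarrow> 's \<Rightarrow> 'a \<Rightarrow> 's \<Rightarrow> real" and \<theta> :: real
  assumes F: "Qlipschitz \<rho> F" and \<rho>: "0 \<le> \<rho>" "\<rho> < 1" and fp: "F Qf = Qf" and \<theta>: "0 \<le> \<theta>"
    and g: "\<And>t. 0 \<le> g t" "\<not> summable g" "g \<longlonglongrightarrow> 0"
    and E: "\<And>t i a k. \<bar>E t i a k\<bar> \<le> 1"
    and Q: "\<And>t i a. Q (Suc t) i a = (1 - g t) * Q t i a
                        + g t * (F (Q t) i a + \<theta> * (\<Sum>k\<in>UNIV. vfun (Q t) $ k * E t i a k))"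
    and noise: "\<And>i a k. (\<lambda>t. noise_avg g (\<lambda>s. E s i a k) t) \<longlonglongrightarrow> 0"
  shows "(\<lambda>t. Q t i a) \<longlonglongrightarrow> Qf i a"
proof -
  define Z where "Z t i a k = noise_avg g (\<lambda>s. E s i a k) t" for t i a k
  define z where "z t = (\<Sum>i\<in>UNIV. \<Sum>a\<in>UNIV. \<Sum>k\<in>UNIV. \<bar>Z t i a k\<bar>)" for t
  define x where "x t = Qdist (noise_corrected \<theta> (Q t) (Z t)) Qf" for t
  let ?N = "real CARD('s)"
  have Z_le: "\<bar>Z t i a k\<bar> \<le> z t" for t i a k
    unfolding z_def by (rule abs_le_sum3)
  have z: "z \<longlonglongrightarrow> 0"
    unfolding z_def Z_def by (intro tendsto_null_sum) (simp add: tendsto_rabs_zero_iff noise)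
  have x: "x \<longlonglongrightarrow> 0"
    unfolding x_def
    by (rule noise_corrected_tendsto_fixpoint[OF F \<rho> fp \<theta> g E Q _ Z_le z]) (simp add: Z_def fun_eq_iff)
  have "(\<lambda>t. \<theta> * ?N * z t) \<longlonglongrightarrow> 0"
    using z by (rule tendsto_mult_right_zero)
  then have "eventually (\<lambda>t. \<theta> * ?N * z t < 1/2) sequentially"
    by (rule order_tendstoD(2)) simp
  then have "eventually (\<lambda>t. norm (Q t i a - Qf i a) \<le> x t + \<theta> * ?N * z t * (2 * (x t + Qnorm Qf))) sequentially"
  proof eventually_elim
    case (elim t)
    with \<theta> Z_le[of t] have "Qdist (Q t) Qf \<le> x t + \<theta> * ?N * z t * (2 * (x t + Qnorm Qf))"
      unfolding x_def by (intro Qdist_le_noise_corrected) auto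
    then show ?case
      using Qdist_ge[of "Q t" i a Qf] by simp
  qed
  moreover have "(\<lambda>t. x t + \<theta> * ?N * z t * (2 * (x t + Qnorm Qf))) \<longlonglongrightarrow> 0 + \<theta> * ?N * 0 * (2 * (0 + Qnorm Qf))"
    by (intro tendsto_intros z x)
  then have "(\<lambda>t. x t + \<theta> * ?N * z t * (2 * (x t + Qnorm Qf))) \<longlonglongrightarrow> 0"
    by simp
  ultimately have "(\<lambda>t. Q t i a - Qf i a) \<longlonglongrightarrow> 0"
    by (rule Lim_null_comparison)
  then show ?thesis by (simp add: LIM_zero_iff)
qed

section \<open>Almost sure decay of the averaged noise\<close>

lemma noise_avg_measurable [measurable]:
  assumes [measurable]: "\<And>t. e t \<in> borel_measurable M"
  shows "(\<lambda>\<omega>. noise_avg g (\<lambda>s. e s \<omega>) t) \<in> borel_measurable M"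
  by (induction t) simp_all

lemma noise_avg_bounded:
  assumes e: "\<And>t \<omega>. \<bar>e t \<omega>\<bar> \<le> 1"
  shows "\<exists>B. \<forall>\<omega>. \<bar>noise_avg g (\<lambda>s. e s \<omega>) t\<bar> \<le> B"
proof (induction t)
  case (Suc t)
  then obtain B where B: "\<And>\<omega>. \<bar>noise_avg g (\<lambda>s. e s \<omega>) t\<bar> \<le> B" by blast
  have "\<bar>noise_avg g (\<lambda>s. e s \<omega>) (Suc t)\<bar> \<le> \<bar>1 - g t\<bar> * B + \<bar>g t\<bar> * 1" for \<omega>
  proof -
    have "\<bar>noise_avg g (\<lambda>s. e s \<omega>) (Suc t)\<bar>
        \<le> \<bar>1 - g t\<bar> * \<bar>noise_avg g (\<lambda>s. e s \<omega>) t\<bar> + \<bar>g t\<bar> * \<bar>e t \<omega>\<bar>"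
      by (simp add: abs_mult[symmetric] abs_triangle_ineq)
    also have "\<dots> \<le> \<bar>1 - g t\<bar> * B + \<bar>g t\<bar> * 1"
      by (intro add_mono mult_left_mono B e) auto
    finally show ?thesis .
  qed
  then show ?case by blast
qed (auto intro: exI[of _ 0])

lemma abs_noise_avg_le:
  assumes g: "\<And>t. t \<ge> T \<Longrightarrow> 0 \<le> g t \<and> g t \<le> 1" and e: "\<And>t. \<bar>e t\<bar> \<le> 1"
  shows "\<bar>noise_avg g e (T + m)\<bar> \<le> max \<bar>noise_avg g e T\<bar> 1"
proof (induction m)
  case (Suc m)
  let ?t = "T + m" and ?b = "max \<bar>noise_avg g e T\<bar> 1"
  have "\<bar>noise_avg g e (Suc ?t)\<bar> \<le> (1 - g ?t) * \<bar>noise_avg g e ?t\<bar> + g ?t * \<bar>e ?t\<bar>"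
    using g[of ?t] abs_triangle_ineq[of "(1 - g ?t) * noise_avg g e ?t" "g ?t * e ?t"]
    by (simp add: abs_mult)
  also have "\<dots> \<le> (1 - g ?t) * ?b + g ?t * ?b"
    using Suc g[of ?t] e[of ?t] by (intro add_mono mult_left_mono) auto
  finally show ?case by (simp add: algebra_simps)
qed simp

lemma noise_avg_tendsto_zero:
  assumes g: "\<And>t. 0 \<le> g t" "\<not> summable g" "g \<longlonglongrightarrow> 0" and e: "\<And>t. \<bar>e t\<bar> \<le> 1"
    and su: "summable (\<lambda>t. g t * (noise_avg g e t)\<^sup>2)"
  shows "noise_avg g e \<longlonglongrightarrow> 0"
proof -
  let ?Z = "noise_avg g e"
  obtain T where T: "\<And>t. t \<ge> T \<Longrightarrow> g t \<le> 1"
    using order_tendstoD(2)[OF g(3), of 1] unfolding eventually_sequentially by force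
  define b where "b = max \<bar>?Z T\<bar> 1"
  have b: "1 \<le> b" by (simp add: b_def)
  have Z_le: "\<bar>?Z t\<bar> \<le> b" if "t \<ge> T" for t
    using abs_noise_avg_le[of T g e "t - T"] T g(1) e that unfolding b_def by simp
  have "(?Z (Suc t))\<^sup>2 \<le> (?Z t)\<^sup>2 + 2 * b * (1 + b) * g t" if t: "t \<ge> T" for t
  proof -
    have "?Z (Suc t) - ?Z t = g t * (e t - ?Z t)"
      by (simp add: algebra_simps)
    then have "\<bar>?Z (Suc t) - ?Z t\<bar> = g t * \<bar>e t - ?Z t\<bar>"
      using g(1)[of t] by (simp add: abs_mult)
    also have "\<dots> \<le> g t * (1 + b)"
      using e[of t] Z_le[OF t] g(1)[of t] by (intro mult_left_mono) auto
    finally have "\<bar>?Z (Suc t) - ?Z t\<bar> * \<bar>?Z (Suc t) + ?Z t\<bar> \<le> g t * (1 + b) * (2 * b)"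
      using Z_le[OF t] Z_le[of "Suc t"] t by (intro mult_mono) auto
    moreover have "(?Z (Suc t))\<^sup>2 - (?Z t)\<^sup>2 = (?Z (Suc t) - ?Z t) * (?Z (Suc t) + ?Z t)"
      by (simp add: power2_eq_square algebra_simps)
    moreover have "(?Z (Suc t) - ?Z t) * (?Z (Suc t) + ?Z t) \<le> \<bar>?Z (Suc t) - ?Z t\<bar> * \<bar>?Z (Suc t) + ?Z t\<bar>"
      by (metis abs_ge_self abs_mult)
    ultimately show ?thesis by (simp add: algebra_simps)
  qed
  then have "eventually (\<lambda>t. (?Z (Suc t))\<^sup>2 \<le> (?Z t)\<^sup>2 + 2 * b * (1 + b) * g t) sequentially"
    unfolding eventually_sequentially by blast
  then have "(\<lambda>t. (?Z t)\<^sup>2) \<longlonglongrightarrow> 0"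
    using b by (intro weighted_summable_tendsto_zero[OF g _ su, of "2 * b * (1 + b)"]) auto
  then have "(\<lambda>t. sqrt ((?Z t)\<^sup>2)) \<longlonglongrightarrow> sqrt 0"
    by (rule tendsto_real_sqrt)
  then show ?thesis
    by (simp add: tendsto_rabs_zero_iff)
qed

lemma (in finite_measure) integrable_abs_le_const:
  fixes f :: "'a \<Rightarrow> real"
  assumes "f \<in> borel_measurable M" and "\<And>x. \<bar>f x\<bar> \<le> B"
  shows "integrable M f"
  using assms by (intro integrable_const_bound[where B=B] AE_I2) auto

context prob_space
begin


context
  fixes e :: "nat \<Rightarrow> 'a \<Rightarrow> real" and g :: "nat \<Rightarrow> real"
  assumes e_measurable [measurable]: "\<And>t. e t \<in> borel_measurable M"
    and abs_e_le: "\<And>t \<omega>. \<bar>e t \<omega>\<bar> \<le> 1"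
    and e_orthogonal: "\<And>s r. s < r \<Longrightarrow> (\<integral>\<omega>. e s \<omega> * e r \<omega> \<partial>M) = 0"
begin

lemma integrable_noise_avg_mult:
  "integrable M (\<lambda>\<omega>. noise_avg g (\<lambda>s. e s \<omega>) t * e r \<omega>)"
  "integrable M (\<lambda>\<omega>. (noise_avg g (\<lambda>s. e s \<omega>) t)\<^sup>2)"
  "integrable M (\<lambda>\<omega>. e s \<omega> * e r \<omega>)"
proof -
  obtain B where B: "\<And>\<omega>. \<bar>noise_avg g (\<lambda>s. e s \<omega>) t\<bar> \<le> B"
    using noise_avg_bounded[where e=e, OF abs_e_le] by blast
  have B0: "0 \<le> B" using B[of undefined] by linarith
  show "integrable M (\<lambda>\<omega>. noise_avg g (\<lambda>s. e s \<omega>) t * e r \<omega>)"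
    using mult_mono[OF B abs_e_le B0 abs_ge_zero]
    by (intro integrable_abs_le_const[where B="B * 1"]) (auto simp: abs_mult)
  show "integrable M (\<lambda>\<omega>. (noise_avg g (\<lambda>s. e s \<omega>) t)\<^sup>2)"
  proof (rule integrable_abs_le_const[where B="B * B"])
    show "\<bar>(noise_avg g (\<lambda>s. e s \<omega>) t)\<^sup>2\<bar> \<le> B * B" for \<omega>
      using mult_mono[OF B[of \<omega>] B[of \<omega>] B0 abs_ge_zero] by (simp add: power2_eq_square abs_mult)
  qed simp
  show "integrable M (\<lambda>\<omega>. e s \<omega> * e r \<omega>)"
    using mult_le_one[OF abs_e_le abs_ge_zero abs_e_le]
    by (intro integrable_abs_le_const[where B=1]) (auto simp: abs_mult)
qed

lemma integral_noise_avg_mult_eq_0: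
  "t \<le> r \<Longrightarrow> (\<integral>\<omega>. noise_avg g (\<lambda>s. e s \<omega>) t * e r \<omega> \<partial>M) = 0"
proof (induction t)
  case (Suc t)
  have "(\<integral>\<omega>. noise_avg g (\<lambda>s. e s \<omega>) (Suc t) * e r \<omega> \<partial>M)
      = (\<integral>\<omega>. (1 - g t) * (noise_avg g (\<lambda>s. e s \<omega>) t * e r \<omega>) + g t * (e t \<omega> * e r \<omega>) \<partial>M)"
    by (simp add: algebra_simps)
  also have "\<dots> = (1 - g t) * (\<integral>\<omega>. noise_avg g (\<lambda>s. e s \<omega>) t * e r \<omega> \<partial>M)
      + g t * (\<integral>\<omega>. e t \<omega> * e r \<omega> \<partial>M)"
    using integrable_noise_avg_mult by simp
  finally show ?case
    using Suc e_orthogonal[of t r] by simp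
qed simp

lemma noise_avg_second_moment_le:
  "(\<integral>\<omega>. (noise_avg g (\<lambda>s. e s \<omega>) (Suc t))\<^sup>2 \<partial>M)
    \<le> (1 - g t)\<^sup>2 * (\<integral>\<omega>. (noise_avg g (\<lambda>s. e s \<omega>) t)\<^sup>2 \<partial>M) + (g t)\<^sup>2"
proof -
  let ?Z = "\<lambda>\<omega>. noise_avg g (\<lambda>s. e s \<omega>) t"
  have "(\<integral>\<omega>. (noise_avg g (\<lambda>s. e s \<omega>) (Suc t))\<^sup>2 \<partial>M)
      = (\<integral>\<omega>. (1 - g t)\<^sup>2 * (?Z \<omega>)\<^sup>2 + (2 * (1 - g t) * g t) * (?Z \<omega> * e t \<omega>) + (g t)\<^sup>2 * (e t \<omega>)\<^sup>2 \<partial>M)"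
    by (simp add: power2_eq_square algebra_simps)
  also have "\<dots> = (1 - g t)\<^sup>2 * (\<integral>\<omega>. (?Z \<omega>)\<^sup>2 \<partial>M) + (2 * (1 - g t) * g t) * (\<integral>\<omega>. ?Z \<omega> * e t \<omega> \<partial>M)
      + (g t)\<^sup>2 * (\<integral>\<omega>. (e t \<omega>)\<^sup>2 \<partial>M)"
    using integrable_noise_avg_mult by (simp add: power2_eq_square)
  also have "(\<integral>\<omega>. ?Z \<omega> * e t \<omega> \<partial>M) = 0"
    by (rule integral_noise_avg_mult_eq_0) simp
  also have "(\<integral>\<omega>. (e t \<omega>)\<^sup>2 \<partial>M) \<le> (\<integral>\<omega>. 1 \<partial>M)"
  proof (rule integral_mono)
    show "integrable M (\<lambda>\<omega>. (e t \<omega>)\<^sup>2)"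
      using integrable_noise_avg_mult(3)[of t t] by (simp add: power2_eq_square)
    show "(e t \<omega>)\<^sup>2 \<le> 1" for \<omega>
      using abs_e_le[of t \<omega>] by (simp add: abs_square_le_1)
  qed simp
  then have "(g t)\<^sup>2 * (\<integral>\<omega>. (e t \<omega>)\<^sup>2 \<partial>M) \<le> (g t)\<^sup>2"
    by (simp add: prob_space mult_left_le)
  finally show ?thesis by simp
qed

lemma AE_noise_avg_tendsto_zero:
  assumes g: "\<And>t. 0 \<le> g t" "\<not> summable g" "g \<longlonglongrightarrow> 0" "summable (\<lambda>t. (g t)\<^sup>2)"
  shows "AE \<omega> in M. (\<lambda>t. noise_avg g (\<lambda>s. e s \<omega>) t) \<longlonglongrightarrow> 0"
proof -
  let ?W = "\<lambda>t \<omega>. g t * (noise_avg g (\<lambda>s. e s \<omega>) t)\<^sup>2"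
  define V where "V t = (\<integral>\<omega>. (noise_avg g (\<lambda>s. e s \<omega>) t)\<^sup>2 \<partial>M)" for t
  have V0: "0 \<le> V t" for t unfolding V_def by simp
  obtain T where T: "\<And>t. t \<ge> T \<Longrightarrow> g t \<le> 1"
    using order_tendstoD(2)[OF g(3), of 1] unfolding eventually_sequentially by force
  have "V (Suc t) \<le> (1 - g t) * V t + (g t)\<^sup>2" if "t \<ge> T" for t
  proof -
    have "(1 - g t)\<^sup>2 \<le> 1 - g t"
      using T[OF that] g(1)[of t] by (simp add: power2_eq_square mult_left_le_one_le)
    then show ?thesis
      using noise_avg_second_moment_le[of t] mult_right_mono[OF _ V0[of t]] unfolding V_def by fastforce
  qed
  then have "summable (\<lambda>t. g t * V t)"
    by (rule summable_weighted_of_contracting_recursion[where V=V, OF g(1,4) V0])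
  then have "(\<Sum>t. ennreal (g t * V t)) \<noteq> \<infinity>"
    using g(1) V0 by (simp add: ennreal_suminf_neq_top)
  moreover have "(\<integral>\<^sup>+\<omega>. ennreal (?W t \<omega>) \<partial>M) = ennreal (g t * V t)" for t
    unfolding V_def using integrable_noise_avg_mult(2) g(1) by (simp add: nn_integral_eq_integral)
  ultimately have "(\<integral>\<^sup>+\<omega>. (\<Sum>t. ennreal (?W t \<omega>)) \<partial>M) \<noteq> \<infinity>"
    by (simp add: nn_integral_suminf)
  then have "AE \<omega> in M. (\<Sum>t. ennreal (?W t \<omega>)) \<noteq> \<infinity>"
    by (intro nn_integral_noteq_infinite) measurable
  then show ?thesis
  proof (rule eventually_mono)
    fix \<omega> assume "(\<Sum>t. ennreal (?W t \<omega>)) \<noteq> \<infinity>"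
    then have "summable (\<lambda>t. ?W t \<omega>)"
      using g(1) by (intro summable_suminf_not_top) auto
    then show "(\<lambda>t. noise_avg g (\<lambda>s. e s \<omega>) t) \<longlonglongrightarrow> 0"
      by (rule noise_avg_tendsto_zero[where e="\<lambda>s. e s \<omega>", OF g(1-3) abs_e_le])
  qed
qed

end

end

section \<open>Sampled transitions\<close>

lemma integral_PiM_pmf_product:
  fixes P :: "'i \<Rightarrow> 'b::finite pmf" and f h :: "'b \<Rightarrow> real"
  assumes xy: "x \<noteq> y"
  shows "(\<integral>\<omega>. f (\<omega> x) * h (\<omega> y) \<partial>PiM UNIV (\<lambda>i. measure_pmf (P i)))
    = (\<integral>z. f z \<partial>P x) * (\<integral>z. h z \<partial>P y)"
proof -
  interpret product_prob_space "\<lambda>i. measure_pmf (P i)" UNIV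
    by unfold_locales
  let ?J = "{x, y}" and ?M = "PiM UNIV (\<lambda>i. measure_pmf (P i))" and ?MJ = "PiM {x, y} (\<lambda>i. measure_pmf (P i))"
  define k where "k i = (if i = x then f else h)" for i
  define G where "G \<rho> = (\<Prod>i\<in>?J. k i (\<rho> i))" for \<rho> :: "'i \<Rightarrow> 'b"
  have G: "G \<in> borel_measurable ?MJ"
    unfolding G_def by (intro borel_measurable_prod measurable_compose[OF measurable_component_singleton]) auto
  have "(\<integral>\<omega>. f (\<omega> x) * h (\<omega> y) \<partial>?M) = (\<integral>\<omega>. G (restrict \<omega> ?J) \<partial>?M)"
    using xy by (simp add: G_def k_def)
  also have "\<dots> = (\<integral>\<rho>. G \<rho> \<partial>distr ?M ?MJ (\<lambda>\<omega>. restrict \<omega> ?J))"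
    by (rule integral_distr[OF measurable_restrict_subset G, symmetric]) simp
  also have "\<dots> = (\<integral>\<rho>. G \<rho> \<partial>?MJ)"
    by (subst distr_PiM_restrict_finite) auto
  also have "\<dots> = (\<Prod>i\<in>?J. integral\<^sup>L (measure_pmf (P i)) (k i))"
    unfolding G_def by (rule product_integral_prod) (auto intro: integrable_measure_pmf_finite)
  also have "\<dots> = (\<integral>z. f z \<partial>P x) * (\<integral>z. h z \<partial>P y)"
    using xy by (simp add: k_def)
  finally show ?thesis .
qed

lemma integral_pmf_centered_indicator:
  fixes q :: "'s::finite pmf"
  shows "(\<integral>j. (if j = k then 1 else 0) - pmf q k \<partial>measure_pmf q) = 0"
proof -
  have "(\<integral>j. (if j = k then 1 else 0) - pmf q k \<partial>measure_pmf q)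
      = (\<Sum>j\<in>UNIV. ((if j = k then 1 else 0) - pmf q k) * pmf q j)"
    by (rule integral_measure_pmf_real) auto
  also have "\<dots> = pmf q k - pmf q k * (\<Sum>j\<in>UNIV. pmf q j)"
    by (simp add: left_diff_distrib sum_subtractf sum_distrib_left if_distrib[of "\<lambda>x. x * _"]
        cong: if_cong)
  finally show ?thesis
    by (simp add: sum_pmf_eq_1)
qed

text \<open>A sample path \<open>\<omega>\<close> draws \<open>\<omega> (t, i, a) \<sim> p\<^sub>i\<^sup>a\<close> independently for all \<open>(t, i, a)\<close>;
  the update at step \<open>t + 1\<close> uses \<open>\<omega> (t + 1, i, a)\<close>.\<close>
definition sample_noise ::
  "('s::finite \<Rightarrow> 'a \<Rightarrow> 's pmf) \<Rightarrow> (nat \<times> 's \<times> 'a \<Rightarrow> 's) \<Rightarrow> nat \<Rightarrow> 's \<Rightarrow> 'a \<Rightarrow> 's \<Rightarrow> real" where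
  "sample_noise p \<omega> t i a k = (if \<omega> (Suc t, i, a) = k then 1 else 0) - pmf (p i a) k"

lemma abs_sample_noise_le: "\<bar>sample_noise p \<omega> t i a k\<bar> \<le> 1"
  unfolding sample_noise_def using pmf_nonneg[of "p i a" k] pmf_le_1[of "p i a" k] by auto

lemma AE_sample_noise_avg_tendsto_zero:
  fixes p :: "'s::finite \<Rightarrow> 'a::finite \<Rightarrow> 's pmf"
  assumes g: "\<And>t. 0 \<le> g t" "\<not> summable g" "g \<longlonglongrightarrow> 0" "summable (\<lambda>t. (g t)\<^sup>2)"
  shows "AE \<omega> in PiM UNIV (\<lambda>(t, i, a). measure_pmf (p i a)).
           \<forall>i a k. (\<lambda>t. noise_avg g (\<lambda>s. sample_noise p \<omega> s i a k) t) \<longlonglongrightarrow> 0"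
proof -
  let ?P = "\<lambda>(t::nat, i, a). p i a"
  let ?M = "PiM UNIV (\<lambda>x. measure_pmf (?P x))"
  have M: "PiM UNIV (\<lambda>(t, i, a). measure_pmf (p i a)) = ?M"
    by (rule arg_cong[where f="PiM UNIV"]) (auto simp: fun_eq_iff)
  interpret prob_space ?M
    by (rule prob_space_PiM) (auto simp: prob_space_measure_pmf)
  have "AE \<omega> in ?M. (\<lambda>t. noise_avg g (\<lambda>s. sample_noise p \<omega> s i a k) t) \<longlonglongrightarrow> 0" for i a k
  proof (rule AE_noise_avg_tendsto_zero[OF _ abs_sample_noise_le _ g])
    let ?e = "\<lambda>j. (if j = k then 1 else 0) - pmf (p i a) k"
    show "(\<lambda>\<omega>. sample_noise p \<omega> t i a k) \<in> borel_measurable ?M" for t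
    proof -
      have "(\<lambda>\<omega>. \<omega> (Suc t, i, a)) \<in> measurable ?M (measure_pmf (p i a))"
        using measurable_component_singleton[of "(Suc t, i, a)" UNIV "\<lambda>x. measure_pmf (?P x)"] by simp
      then have "(\<lambda>\<omega>. ?e (\<omega> (Suc t, i, a))) \<in> borel_measurable ?M"
        by (rule measurable_compose) simp
      then show ?thesis by (simp add: sample_noise_def)
    qed
    show "(\<integral>\<omega>. sample_noise p \<omega> s i a k * sample_noise p \<omega> r i a k \<partial>?M) = 0" if "s < r" for s r
      using integral_PiM_pmf_product[of "(Suc s, i, a)" "(Suc r, i, a)" ?P ?e ?e] that
      by (simp add: sample_noise_def integral_pmf_centered_indicator)
  qed
  then have "AE \<omega> in ?M. \<forall>x\<in>UNIV. (\<lambda>t. noise_avg g (\<lambda>s. sample_noise p \<omega> s (fst x) (fst (snd x)) (snd (snd x))) t) \<longlonglongrightarrow> 0"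
    by (intro AE_finite_allI) auto
  then show ?thesis
    unfolding M by (rule eventually_mono) auto
qed

lemma robust_Q_iter_Suc:
  fixes p :: "'s::finite \<Rightarrow> 'a::finite \<Rightarrow> 's pmf"
  shows "robust_Q_iter Q0 c \<theta> Uhat \<gamma> \<omega> (Suc t) i a
    = (1 - \<gamma> (Suc t)) * robust_Q_iter Q0 c \<theta> Uhat \<gamma> \<omega> t i a
      + \<gamma> (Suc t) * (proxy_bellman c \<theta> Uhat p (robust_Q_iter Q0 c \<theta> Uhat \<gamma> \<omega> t) i a
        + \<theta> * (\<Sum>k\<in>UNIV. vfun (robust_Q_iter Q0 c \<theta> Uhat \<gamma> \<omega> t) $ k * sample_noise p \<omega> t i a k))"
proof -
  let ?Q = "robust_Q_iter Q0 c \<theta> Uhat \<gamma> \<omega> t"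
  let ?v = "vfun ?Q" and ?j = "\<omega> (Suc t, i, a)"
  have pointwise: "?v $ k * sample_noise p \<omega> t i a k
      = (if ?j = k then ?v $ k else 0) - pmf (p i a) k * ?v $ k" for k
    by (simp add: sample_noise_def algebra_simps)
  have "(\<Sum>k\<in>UNIV. ?v $ k * sample_noise p \<omega> t i a k)
      = (\<Sum>k\<in>UNIV. if ?j = k then ?v $ k else 0) - (\<Sum>k\<in>UNIV. pmf (p i a) k * ?v $ k)"
    by (simp only: pointwise sum_subtractf)
  also have "\<dots> = ?v $ ?j - pmf_vec (p i a) \<bullet> ?v"
    by (simp add: inner_vec_def pmf_vec_def)
  finally have noise: "(\<Sum>k\<in>UNIV. ?v $ k * sample_noise p \<omega> t i a k) = ?v $ ?j - pmf_vec (p i a) \<bullet> ?v" .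
  have "Min (range (?Q ?j)) = ?v $ ?j"
    by (simp add: vfun_def)
  then show ?thesis
    unfolding noise proxy_bellman_def by (simp add: Let_def algebra_simps)
qed

lemma step_lengths_Suc:
  fixes \<gamma> :: "nat \<Rightarrow> real"
  assumes "\<And>t. 0 \<le> \<gamma> t" "\<not> summable \<gamma>" "summable (\<lambda>t. (\<gamma> t)\<^sup>2)"
  shows "\<And>t. 0 \<le> \<gamma> (Suc t)" "\<not> summable (\<lambda>t. \<gamma> (Suc t))" "(\<lambda>t. \<gamma> (Suc t)) \<longlonglongrightarrow> 0"
    "summable (\<lambda>t. (\<gamma> (Suc t))\<^sup>2)"
proof -
  show "0 \<le> \<gamma> (Suc t)" for t using assms(1) .
  show "\<not> summable (\<lambda>t. \<gamma> (Suc t))"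
    using assms(2) summable_Suc_iff[of \<gamma>] by simp
  show "summable (\<lambda>t. (\<gamma> (Suc t))\<^sup>2)"
    using assms(3) summable_Suc_iff[of "\<lambda>t. (\<gamma> t)\<^sup>2"] by simp
  have "(\<lambda>t. sqrt ((\<gamma> t)\<^sup>2)) \<longlonglongrightarrow> sqrt 0"
    using summable_LIMSEQ_zero[OF assms(3)] by (rule tendsto_real_sqrt)
  then have "\<gamma> \<longlonglongrightarrow> 0"
    using assms(1) by simp
  then show "(\<lambda>t. \<gamma> (Suc t)) \<longlonglongrightarrow> 0"
    by (rule LIMSEQ_Suc)
qed

theorem theorem2:
  fixes c :: "'s::finite \<Rightarrow> 'a::finite \<Rightarrow> real"
    and \<theta> :: real
    and p :: "'s \<Rightarrow> 'a \<Rightarrow> 's pmf"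
    and U Uhat :: "'s \<Rightarrow> 'a \<Rightarrow> (real ^ 's) set"
    and Qstar Q0 :: "'s \<Rightarrow> 'a \<Rightarrow> real"
    and \<gamma> :: "nat \<Rightarrow> real"
  assumes theta: "0 < \<theta>" "\<theta> < 1"
    and U_ne: "\<And>i a. U i a \<noteq> {}" and U_compact: "\<And>i a. compact (U i a)"
    and P_simplex: "\<And>i a. (\<lambda>x. pmf_vec (p i a) + x) ` U i a \<subseteq> prob_simplex"
    and Uhat_ne: "\<And>i a. Uhat i a \<noteq> {}" and Uhat_compact: "\<And>i a. compact (Uhat i a)"
    and U_sub: "\<And>i a. U i a \<subseteq> Uhat i a"
    and Qstar: "\<And>i a. Qstar i a = c i a
                  + \<theta> * support_fun ((\<lambda>x. pmf_vec (p i a) + x) ` U i a) (vfun Qstar)"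
    and gamma_nonneg: "\<And>t. 0 \<le> \<gamma> t"
    and gamma_div: "\<not> summable \<gamma>"
    and gamma_sq: "summable (\<lambda>t. (\<gamma> t)\<^sup>2)"
    and contr: "\<theta> * (1 + Max (range (\<lambda>(i, a). beta_ia (Uhat i a) (U i a)))) < 1"
  shows "AE \<omega> in PiM UNIV (\<lambda>(t, i, a). measure_pmf (p i a)).
           \<exists>Q'. (\<forall>i a. (\<lambda>t. robust_Q_iter Q0 c \<theta> Uhat \<gamma> \<omega> t i a) \<longlonglongrightarrow> Q' i a)
              \<and> Qnorm (\<lambda>i a. Q' i a - Qstar i a)
                  \<le> (let \<beta> = Max (range (\<lambda>(i, a). beta_ia (Uhat i a) (U i a)))
                     in \<theta> * \<beta> / (1 - \<theta> * (1 + \<beta>))) * Qnorm Qstar"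
proof -
  define \<beta> where "\<beta> = Max (range (\<lambda>(i, a). beta_ia (Uhat i a) (U i a)))"
  have \<beta>: "beta_ia (Uhat i a) (U i a) \<le> \<beta>" for i a
    unfolding \<beta>_def by (rule Max_ge) (auto intro: image_eqI[where x="(i, a)"])
  have "0 \<le> \<beta>"
    using beta_ia_nonneg[OF U_ne Uhat_compact Uhat_ne] \<beta> order_trans by blast
  then have \<rho>: "0 \<le> \<theta> * (1 + \<beta>)" "\<theta> * (1 + \<beta>) < 1"
    using theta contr unfolding \<beta>_def[symmetric] by simp_all
  let ?F = "proxy_bellman c \<theta> Uhat p"
  have F: "Qlipschitz (\<theta> * (1 + \<beta>)) ?F"
    using theta by (intro Qlipschitz_proxy_bellman[OF U_ne Uhat_compact Uhat_ne P_simplex \<beta>]) simp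
  then obtain Qf where Qf: "?F Qf = Qf"
    using Qlipschitz_has_fixpoint \<rho> by blast
  have error: "Qdist Qf Qstar \<le> \<theta> * \<beta> / (1 - \<theta> * (1 + \<beta>)) * Qnorm Qstar"
    using theta \<rho>(2) by (intro proxy_fixpoint_dist_robust[OF U_ne U_compact Uhat_compact Uhat_ne U_sub
        P_simplex \<beta> _ _ Qstar Qf]) simp_all
  note g = step_lengths_Suc[OF gamma_nonneg gamma_div gamma_sq]
  have "AE \<omega> in PiM UNIV (\<lambda>(t, i, a). measure_pmf (p i a)).
      \<forall>i a. (\<lambda>t. robust_Q_iter Q0 c \<theta> Uhat \<gamma> \<omega> t i a) \<longlonglongrightarrow> Qf i a"
    using AE_sample_noise_avg_tendsto_zero[OF g]
  proof (rule eventually_mono, goal_cases)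
    case (1 \<omega>)
    then show ?case
      using theta by (intro allI noisy_iteration_tendsto_fixpoint[OF F \<rho> Qf _ g(1-3) abs_sample_noise_le
          robust_Q_iter_Suc]) auto
  qed
  then show ?thesis
    using error unfolding Let_def \<beta>_def[symmetric] Qdist_def by (auto elim!: eventually_mono)
qed

end
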